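(* For every $k\ge2$, and also for $k=*$, one has $[\bar D^{(k)}_x,\bar D^{(k)}_y]=0$. Moreover, for every $k\ge2$ and for $k=*$, every smooth function $f$ on $\bar{\mathcal E}_k$ (depending on finitely many coordinates) with $\bar D^{(k)}_x(f)=\bar D^{(k)}_y(f)=0$ is constant, i.e. the coverings $\bar{\mathcal E}_k\to\mathcal E_1$ are irreducible.
   Context: Let $\mathcal E_1$ be the system $u_y+vu_x=\frac1{v-u}$, $v_y+uv_x=\frac1{u-v}$ with internal coordinates $x,y,u_i=\partial^iu/\partial x^i$, $v_i=\partial^iv/\partial x^i$ ($i\ge0$) and total derivatives $D_x,D_y$ (with $D_y(u)=\frac1{v-u}-vu_1$, $D_y(v)=\frac1{u-v}-uv_1$). Put $\varphi^{(-1)}=1$, $\varphi^{(0)}=0$, $\varphi^{(1)}=-y$, $\varphi^{(2)}=-x$, let $\varphi^{(k)}$, $k\ge3$, be new coordinates and $\varphi(\lambda)=\sum_{k\ge-1}\varphi^{(k)}\lambda^k$. Define functions $\bar X^{(k)},\bar Y^{(k)}$ ($k\ge3$) of $x,y,u,v,\varphi^{(3)},\dots,\varphi^{(k-1)}$ as the unique ones for which, writing $\varphi_x=\sum_{k\ge1}\bar X^{(k)}\lambda^k$, $\varphi_y=\sum_{k\ge1}\bar Y^{(k)}\lambda^k$ with $\bar X^{(1)}=0,\bar X^{(2)}=-1,\bar Y^{(1)}=-1,\bar Y^{(2)}=0$, the identities $(\varphi-u)(\varphi-v)\varphi_x=-1$ and $(\varphi-u)(\varphi-v)\varphi_y=u+v-\varphi$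 hold coefficientwise in $\lambda$. For $k\ge2$, $\bar{\mathcal E}_k$ has coordinates of $\mathcal E_1$ together with $\varphi^{(3)},\dots,\varphi^{(k+1)}$, and $\bar D^{(k)}_x=D_x+\sum_{i=3}^{k+1}\bar X^{(i)}\partial/\partial\varphi^{(i)}$, $\bar D^{(k)}_y=D_y+\sum_{i=3}^{k+1}\bar Y^{(i)}\partial/\partial\varphi^{(i)}$; $\bar{\mathcal E}_*$ has all $\varphi^{(k)}$, $k\ge3$, with the infinite sums. *)

theory Defs
  imports "HOL-Analysis.Analysis" "HOL-Computational_Algebra.Formal_Power_Series"
    "HOL-Library.Extended_Nat"
begin

text \<open>Coordinates: x, y, u_i, v_i (i >= 0), phi^(j) (only j >= 3 are genuine coordinates).\<close>
datatype coord = CX | CY | CU nat | CV nat | CPhi nat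

type_synonym pt = "coord \<Rightarrow> real"

text \<open>Domain of the system: u <> v (where the right-hand sides are defined).\<close>
definition Dom :: "pt set" where
  "Dom = {p. p (CU 0) \<noteq> p (CV 0)}"

text \<open>Coordinates of the covering bar E_k; k = infinity encodes k = *.\<close>
definition allowed :: "enat \<Rightarrow> coord \<Rightarrow> bool" where
  "allowed k c = (case c of CPhi i \<Rightarrow> 3 \<le> i \<and> enat i \<le> k + 1 | _ \<Rightarrow> True)"

definition pd :: "coord \<Rightarrow> (pt \<Rightarrow> real) \<Rightarrow> pt \<Rightarrow> real" where
  "pd c f p = deriv (\<lambda>t. f (p(c := t))) (p c)"

fun smooth_n :: "nat \<Rightarrow> (pt \<Rightarrow> real) \<Rightarrow> bool" where
  "smooth_n 0 f = continuous_on Dom f"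
| "smooth_n (Suc n) f = (continuous_on Dom f \<and>
      (\<forall>c. \<forall>p\<in>Dom. (\<lambda>t. f (p(c := t))) differentiable (at (p c))) \<and>
      (\<forall>c. smooth_n n (pd c f)))"

definition smooth :: "(pt \<Rightarrow> real) \<Rightarrow> bool" where
  "smooth f = (\<forall>n. smooth_n n f)"

definition depends_only :: "(pt \<Rightarrow> real) \<Rightarrow> coord set \<Rightarrow> bool" where
  "depends_only f S = (\<forall>p q. (\<forall>c\<in>S. p c = q c) \<longrightarrow> f p = f q)"

definition smooth_fun_on :: "enat \<Rightarrow> (pt \<Rightarrow> real) \<Rightarrow> bool" where
  "smooth_fun_on k f = (\<exists>S. finite S \<and> (\<forall>c\<in>S. allowed k c) \<and> depends_only f S \<and> smooth f)"

text \<open>Vector field with coefficients coef applied to f (the sum is finite for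
  finitely dependent f).\<close>
definition vf :: "(coord \<Rightarrow> pt \<Rightarrow> real) \<Rightarrow> (pt \<Rightarrow> real) \<Rightarrow> pt \<Rightarrow> real" where
  "vf coef f p = (\<Sum>c\<in>{c. pd c f p \<noteq> 0}. coef c p * pd c f p)"

definition Dx1_coef :: "coord \<Rightarrow> pt \<Rightarrow> real" where
  "Dx1_coef c p = (case c of CX \<Rightarrow> 1 | CY \<Rightarrow> 0 | CU i \<Rightarrow> p (CU (Suc i))
      | CV i \<Rightarrow> p (CV (Suc i)) | CPhi _ \<Rightarrow> 0)"

definition Dx1 :: "(pt \<Rightarrow> real) \<Rightarrow> pt \<Rightarrow> real" where
  "Dx1 = vf Dx1_coef"

definition Fu :: "pt \<Rightarrow> real" where
  "Fu p = 1 / (p (CV 0) - p (CU 0)) - p (CV 0) * p (CU 1)"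

definition Fv :: "pt \<Rightarrow> real" where
  "Fv p = 1 / (p (CU 0) - p (CV 0)) - p (CU 0) * p (CV 1)"

text \<open>lambda * phi(lambda) as a formal power series: coefficient n is phi^(n-1),
  with phi^(-1)=1, phi^(0)=0, phi^(1)=-y, phi^(2)=-x.\<close>
definition lphi :: "pt \<Rightarrow> real fps" where
  "lphi p = Abs_fps (\<lambda>n. if n = 0 then 1 else if n = 1 then 0
      else if n = 2 then - p CY else if n = 3 then - p CX else p (CPhi (n - 1)))"

text \<open>lambda^2 (phi - u)(phi - v).\<close>
definition Qser :: "pt \<Rightarrow> real fps" where
  "Qser p = (lphi p - fps_const (p (CU 0)) * fps_X) * (lphi p - fps_const (p (CV 0)) * fps_X)"

text \<open>phi_x = sum Xbar^(k) lambda^k: unique series with (phi-u)(phi-v) phi_x = -1,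
  i.e. lambda^2 (phi-u)(phi-v) phi_x = - lambda^2.\<close>
definition Xser :: "pt \<Rightarrow> real fps" where
  "Xser p = (THE F. Qser p * F = - (fps_X ^ 2))"

text \<open>phi_y: (phi-u)(phi-v) phi_y = u + v - phi, multiplied by lambda^2.\<close>
definition Yser :: "pt \<Rightarrow> real fps" where
  "Yser p = (THE F. Qser p * F = fps_const (p (CU 0) + p (CV 0)) * fps_X ^ 2 - fps_X * lphi p)"

definition Xbar :: "nat \<Rightarrow> pt \<Rightarrow> real" where
  "Xbar j p = fps_nth (Xser p) j"

definition Ybar :: "nat \<Rightarrow> pt \<Rightarrow> real" where
  "Ybar j p = fps_nth (Yser p) j"

definition Dxb_coef :: "enat \<Rightarrow> coord \<Rightarrow> pt \<Rightarrow> real" where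
  "Dxb_coef k c p = (case c of CX \<Rightarrow> 1 | CY \<Rightarrow> 0 | CU i \<Rightarrow> p (CU (Suc i))
      | CV i \<Rightarrow> p (CV (Suc i))
      | CPhi j \<Rightarrow> (if allowed k (CPhi j) then Xbar j p else 0))"

definition Dyb_coef :: "enat \<Rightarrow> coord \<Rightarrow> pt \<Rightarrow> real" where
  "Dyb_coef k c p = (case c of CX \<Rightarrow> 0 | CY \<Rightarrow> 1 | CU i \<Rightarrow> (Dx1 ^^ i) Fu p
      | CV i \<Rightarrow> (Dx1 ^^ i) Fv p
      | CPhi j \<Rightarrow> (if allowed k (CPhi j) then Ybar j p else 0))"

definition Dxb :: "enat \<Rightarrow> (pt \<Rightarrow> real) \<Rightarrow> pt \<Rightarrow> real" where
  "Dxb k = vf (Dxb_coef k)"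

definition Dyb :: "enat \<Rightarrow> (pt \<Rightarrow> real) \<Rightarrow> pt \<Rightarrow> real" where
  "Dyb k = vf (Dyb_coef k)"

end

theory Submission
  imports Defs "HOL-Computational_Algebra.Polynomial"
begin

(*
  The commutator of the two vector fields D_x, D_y is again a vector field (symmetry of second
  partial derivatives); its coefficient at the coordinate c is D_x(Y_c) - D_y(X_c), where X_c, Y_c
  are the coefficients of D_x, D_y at c. On u_i, v_i this vanishes because D_y u_i = D_x^i (D_y u).
  On phi^(j) it is the j-th coefficient of D_x phi_y - D_y phi_x. Differentiating
  Q phi_x = -1 along D_y and Q phi_y = u + v - phi along D_x, where Q = (phi - u)(phi - v), expresses
  Q^2 (D_x phi_y - D_y phi_x) through D_x phi and D_y phi. Up to the order in question these are
  phi_x and phi_y again, and the expression vanishes because u, v solve the system.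

  For irreducibility, let D_x f = D_y f = 0. Since f depends on finitely many coordinates and
  D_x has coefficient u_(i+1) at u_i, a descending induction gives df/du_i = df/dv_i = 0. So f does
  not change when u moves within its half of the domain, whereas the coefficient of D_x at phi^(j)
  is a polynomial of degree j - 2 in u. Hence all df/dphi^(j) vanish, then df/dx = D_x f = 0 and
  df/dy = D_y f = 0, and f is constant on each of the convex halves u < v and u > v.
*)

definition pdiff :: "coord \<Rightarrow> (pt \<Rightarrow> real) \<Rightarrow> pt \<Rightarrow> bool" where
  "pdiff c f p \<longleftrightarrow> (\<lambda>t. f (p(c := t))) differentiable (at (p c))"

lemma pdiff_has_pd:
  "pdiff c f p \<Longrightarrow> ((\<lambda>t. f (p(c := t))) has_real_derivative pd c f p) (at (p c))"
  unfolding pdiff_def pd_def using DERIV_deriv_iff_real_differentiable by blast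

lemma pd_eqI: "((\<lambda>t. f (p(c := t))) has_real_derivative D) (at (p c)) \<Longrightarrow> pd c f p = D"
  unfolding pd_def by (rule DERIV_imp_deriv)

lemma pdiffI: "((\<lambda>t. f (p(c := t))) has_real_derivative D) (at (p c)) \<Longrightarrow> pdiff c f p"
  unfolding pdiff_def using real_differentiable_def by blast

lemma pd_const [simp]: "pd c (\<lambda>q. a) p = 0"
  by (rule pd_eqI) simp

lemma pdiff_const [simp]: "pdiff c (\<lambda>q. a) p"
  by (rule pdiffI[of _ _ _ 0]) simp

lemma has_pd_coord: "((\<lambda>t. (p(c := t)) d) has_real_derivative (if c = d then 1 else 0)) (at (p c))"
  by (cases "c = d") auto

lemma pd_coord [simp]: "pd c (\<lambda>q. q d) p = (if c = d then 1 else 0)"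
  by (rule pd_eqI[OF has_pd_coord])

lemma pdiff_coord [simp]: "pdiff c (\<lambda>q. q d) p"
  by (rule pdiffI[OF has_pd_coord])

lemma pd_add: "pdiff c f p \<Longrightarrow> pdiff c g p \<Longrightarrow> pd c (\<lambda>q. f q + g q) p = pd c f p + pd c g p"
  by (rule pd_eqI) (intro DERIV_add pdiff_has_pd)

lemma pdiff_add: "pdiff c f p \<Longrightarrow> pdiff c g p \<Longrightarrow> pdiff c (\<lambda>q. f q + g q) p"
  by (rule pdiffI[where D = "pd c f p + pd c g p"]) (intro DERIV_add pdiff_has_pd)

lemma pd_diff: "pdiff c f p \<Longrightarrow> pdiff c g p \<Longrightarrow> pd c (\<lambda>q. f q - g q) p = pd c f p - pd c g p"
  by (rule pd_eqI) (intro DERIV_diff pdiff_has_pd)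

lemma pdiff_diff: "pdiff c f p \<Longrightarrow> pdiff c g p \<Longrightarrow> pdiff c (\<lambda>q. f q - g q) p"
  by (rule pdiffI[where D = "pd c f p - pd c g p"]) (intro DERIV_diff pdiff_has_pd)

lemma pd_minus: "pdiff c f p \<Longrightarrow> pd c (\<lambda>q. - f q) p = - pd c f p"
  by (rule pd_eqI) (intro DERIV_minus pdiff_has_pd)

lemma pdiff_minus: "pdiff c f p \<Longrightarrow> pdiff c (\<lambda>q. - f q) p"
  by (rule pdiffI[where D = "- pd c f p"]) (intro DERIV_minus pdiff_has_pd)

lemma pd_mult:
  "pdiff c f p \<Longrightarrow> pdiff c g p \<Longrightarrow> pd c (\<lambda>q. f q * g q) p = pd c f p * g p + f p * pd c g p"
  by (rule pd_eqI) (auto intro!: derivative_eq_intros pdiff_has_pd)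

lemma pdiff_mult: "pdiff c f p \<Longrightarrow> pdiff c g p \<Longrightarrow> pdiff c (\<lambda>q. f q * g q) p"
  by (rule pdiffI[where D = "pd c f p * g p + f p * pd c g p"])
     (auto intro!: derivative_eq_intros pdiff_has_pd)

lemma pd_sum:
  "finite I \<Longrightarrow> (\<And>i. i \<in> I \<Longrightarrow> pdiff c (f i) p) \<Longrightarrow>
     pd c (\<lambda>q. \<Sum>i\<in>I. f i q) p = (\<Sum>i\<in>I. pd c (f i) p)"
  by (rule pd_eqI) (intro DERIV_sum pdiff_has_pd)

lemma pdiff_sum:
  "finite I \<Longrightarrow> (\<And>i. i \<in> I \<Longrightarrow> pdiff c (f i) p) \<Longrightarrow> pdiff c (\<lambda>q. \<Sum>i\<in>I. f i q) p"
  by (rule pdiffI[where D = "\<Sum>i\<in>I. pd c (f i) p"]) (intro DERIV_sum pdiff_has_pd)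

lemma open_Dom: "open Dom"
  unfolding Dom_def by (intro open_Collect_neq continuous_on_product_coordinates)

lemma eventually_upd_in_open:
  assumes "open U" "p \<in> U"
  shows "eventually (\<lambda>t. p(c := t) \<in> U) (nhds (p c))"
proof -
  have "continuous_on UNIV (\<lambda>t. (p(c := t)) i)" for i
    by (cases "i = c") auto
  then have "continuous_on UNIV (\<lambda>t. p(c := t))"
    by (rule continuous_on_coordinatewise_then_product)
  then have "open ((\<lambda>t. p(c := t)) -` U)"
    by (rule open_vimage[OF assms(1)])
  then have "eventually (\<lambda>t. t \<in> (\<lambda>t. p(c := t)) -` U) (nhds (p c))"
    using assms(2) by (intro eventually_nhds_in_open) auto
  then show ?thesis
    by simp
qed

lemma eventually_upd_in_Dom: "p \<in> Dom \<Longrightarrow> eventually (\<lambda>t. p(c := t) \<in> Dom) (nhds (p c))"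
  by (rule eventually_upd_in_open[OF open_Dom])

lemma eventually_upd_eq_Dom:
  assumes "p \<in> Dom" "\<And>q. q \<in> Dom \<Longrightarrow> f q = g q"
  shows "eventually (\<lambda>t. f (p(c := t)) = g (p(c := t))) (nhds (p c))"
  using eventually_upd_in_Dom[OF assms(1)] by (rule eventually_mono) (rule assms(2))

lemma pd_cong_Dom:
  "p \<in> Dom \<Longrightarrow> (\<And>q. q \<in> Dom \<Longrightarrow> f q = g q) \<Longrightarrow> pd c f p = pd c g p"
  unfolding pd_def by (rule deriv_cong_ev[OF eventually_upd_eq_Dom refl])

lemma pdiff_cong_Dom:
  assumes "p \<in> Dom" "\<And>q. q \<in> Dom \<Longrightarrow> f q = g q" "pdiff c f p"
  shows "pdiff c g p"
proof (rule pdiffI)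
  have "eventually (\<lambda>t. f (p(c := t)) = g (p(c := t))) (nhds (p c))"
    using assms(1,2) by (rule eventually_upd_eq_Dom)
  from DERIV_cong_ev[OF refl this refl] pdiff_has_pd[OF assms(3)]
  show "((\<lambda>t. g (p(c := t))) has_real_derivative pd c f p) (at (p c))"
    by simp
qed

lemma depends_only_upd: "depends_only f S \<Longrightarrow> c \<notin> S \<Longrightarrow> f (p(c := t)) = f p"
  unfolding depends_only_def by (metis fun_upd_other)

lemma pd_outside: "depends_only f S \<Longrightarrow> c \<notin> S \<Longrightarrow> pd c f p = 0"
  by (rule pd_eqI) (simp add: depends_only_upd)

lemma depends_only_mono: "depends_only f S \<Longrightarrow> S \<subseteq> T \<Longrightarrow> depends_only f T"
  unfolding depends_only_def by blast

lemma depends_only_pd: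
  assumes "depends_only f S"
  shows "depends_only (pd c f) S"
  unfolding depends_only_def
proof (intro allI impI)
  fix p q :: pt
  assume pq: "\<forall>c\<in>S. p c = q c"
  show "pd c f p = pd c f q"
  proof (cases "c \<in> S")
    case True
    have "\<forall>d\<in>S. (p(c := t)) d = (q(c := t)) d" for t
      using pq by simp
    then have "(\<lambda>t. f (p(c := t))) = (\<lambda>t. f (q(c := t)))"
      using assms unfolding depends_only_def by blast
    then show ?thesis
      unfolding pd_def using True pq by simp
  qed (simp add: pd_outside[OF assms])
qed

lemma depends_only_const: "depends_only (\<lambda>q. a) S"
  by (simp add: depends_only_def)

lemma depends_only_coord: "d \<in> S \<Longrightarrow> depends_only (\<lambda>q. q d) S"
  by (simp add: depends_only_def)

lemma depends_only_mult:
  "depends_only f S \<Longrightarrow> depends_only g S \<Longrightarrow> depends_only (\<lambda>q. f q * g q) S"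
  unfolding depends_only_def by (metis (no_types, lifting))

lemma depends_only_sum:
  "(\<And>i. i \<in> I \<Longrightarrow> depends_only (f i) S) \<Longrightarrow> depends_only (\<lambda>q. \<Sum>i\<in>I. f i q) S"
  unfolding depends_only_def by (auto intro: sum.cong)

lemma vf_eq_sum:
  assumes "finite S" "depends_only f S"
  shows "vf coef f p = (\<Sum>c\<in>S. coef c p * pd c f p)"
proof -
  have "{c. pd c f p \<noteq> 0} \<subseteq> S"
    using pd_outside[OF assms(2)] by blast
  then show ?thesis
    unfolding vf_def by (intro sum.mono_neutral_left[OF assms(1)]) auto
qed

fun pdiff_n :: "nat \<Rightarrow> (pt \<Rightarrow> real) \<Rightarrow> bool" where
  "pdiff_n 0 g \<longleftrightarrow> True"
| "pdiff_n (Suc n) g \<longleftrightarrow> (\<forall>c. \<forall>p\<in>Dom. pdiff c g p) \<and> (\<forall>c. pdiff_n n (pd c g))"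

lemma pdiff_n_SucD: "pdiff_n (Suc n) g \<Longrightarrow> pdiff_n n g"
  by (induction n arbitrary: g) auto

lemma pdiff_n_cong: "pdiff_n n g \<Longrightarrow> (\<And>q. q \<in> Dom \<Longrightarrow> g q = h q) \<Longrightarrow> pdiff_n n h"
proof (induction n arbitrary: g h)
  case (Suc n)
  have "pdiff c h p" if "p \<in> Dom" for c p
  proof (rule pdiff_cong_Dom[OF that])
    show "g q = h q" if "q \<in> Dom" for q
      using that by (rule Suc.prems(2))
    show "pdiff c g p"
      using Suc.prems(1) that by simp
  qed
  moreover have "pdiff_n n (pd c h)" for c
  proof (rule Suc.IH)
    show "pdiff_n n (pd c g)"
      using Suc.prems(1) by simp
    show "pd c g q = pd c h q" if "q \<in> Dom" for q
      using that Suc.prems(2) by (rule pd_cong_Dom)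
  qed
  ultimately show ?case
    by simp
qed simp

lemma pdiff_n_const: "pdiff_n n (\<lambda>q. a)"
proof (induction n arbitrary: a)
  case (Suc n)
  have "pd c (\<lambda>q. a) = (\<lambda>q. 0)" for c
    by (rule ext) simp
  then show ?case
    using Suc by simp
qed simp

lemma pdiff_n_coord: "pdiff_n n (\<lambda>q. q d)"
proof (cases n)
  case (Suc m)
  have "pd c (\<lambda>q. q d) = (\<lambda>q. if c = d then 1 else 0)" for c
    by (rule ext) simp
  then show ?thesis
    using Suc pdiff_n_const by simp
qed simp

lemma pdiff_n_add: "pdiff_n n f \<Longrightarrow> pdiff_n n g \<Longrightarrow> pdiff_n n (\<lambda>q. f q + g q)"
proof (induction n arbitrary: f g)
  case (Suc n)
  have "pdiff_n n (pd c (\<lambda>q. f q + g q))" for c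
  proof (rule pdiff_n_cong)
    show "pdiff_n n (\<lambda>q. pd c f q + pd c g q)"
      using Suc by simp
    show "pd c f q + pd c g q = pd c (\<lambda>q. f q + g q) q" if "q \<in> Dom" for q
      using Suc.prems that by (simp add: pd_add)
  qed
  then show ?case
    using Suc.prems by (simp add: pdiff_add)
qed simp

lemma pdiff_n_mult: "pdiff_n n f \<Longrightarrow> pdiff_n n g \<Longrightarrow> pdiff_n n (\<lambda>q. f q * g q)"
proof (induction n arbitrary: f g)
  case (Suc n)
  have "pdiff_n n (pd c (\<lambda>q. f q * g q))" for c
  proof (rule pdiff_n_cong)
    have "pdiff_n n f" "pdiff_n n g"
      using Suc.prems by (auto intro: pdiff_n_SucD)
    then show "pdiff_n n (\<lambda>q. pd c f q * g q + f q * pd c g q)"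
      using Suc by (simp add: pdiff_n_add)
    show "pd c f q * g q + f q * pd c g q = pd c (\<lambda>q. f q * g q) q" if "q \<in> Dom" for q
      using Suc.prems that by (simp add: pd_mult)
  qed
  then show ?case
    using Suc.prems by (simp add: pdiff_mult)
qed simp

lemma pdiff_n_minus: "pdiff_n n f \<Longrightarrow> pdiff_n n (\<lambda>q. - f q)"
  using pdiff_n_mult[OF pdiff_n_const[of n "-1"]] by simp

lemma pdiff_n_diff: "pdiff_n n f \<Longrightarrow> pdiff_n n g \<Longrightarrow> pdiff_n n (\<lambda>q. f q - g q)"
  using pdiff_n_add[OF _ pdiff_n_minus, of n f g] by simp

lemma pdiff_n_sum: "finite I \<Longrightarrow> (\<And>i. i \<in> I \<Longrightarrow> pdiff_n n (f i)) \<Longrightarrow> pdiff_n n (\<lambda>q. \<Sum>i\<in>I. f i q)"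
  by (induction I rule: finite_induct) (simp_all add: pdiff_n_const pdiff_n_add)

definition inv_gap :: "pt \<Rightarrow> real" where
  "inv_gap q = 1 / (q (CV 0) - q (CU 0))"

lemma has_pd_inv_gap:
  assumes "p \<in> Dom"
  shows "((\<lambda>t. inv_gap (p(c := t))) has_real_derivative
      (if c = CU 0 then inv_gap p * inv_gap p else if c = CV 0 then - (inv_gap p * inv_gap p) else 0))
      (at (p c))"
proof -
  have "p (CV 0) - p (CU 0) \<noteq> 0"
    using assms by (simp add: Dom_def)
  then show ?thesis
    unfolding inv_gap_def
    by (cases "c = CU 0"; cases "c = CV 0")
       (auto intro!: derivative_eq_intros simp: power2_eq_square divide_simps)
qed

lemma pdiff_n_inv_gap: "pdiff_n n inv_gap"
proof (induction n)
  case (Suc n)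
  let ?k = "\<lambda>c. if c = CU 0 then 1 else if c = CV 0 then -1 else (0::real)"
  have "pdiff_n n (pd c inv_gap)" for c
  proof (rule pdiff_n_cong)
    show "pdiff_n n (\<lambda>q. ?k c * (inv_gap q * inv_gap q))"
      using Suc by (intro pdiff_n_mult pdiff_n_const)
    show "?k c * (inv_gap q * inv_gap q) = pd c inv_gap q" if "q \<in> Dom" for q
      using pd_eqI[OF has_pd_inv_gap[OF that, of c]] by simp
  qed
  then show ?case
    by (auto intro: pdiffI has_pd_inv_gap)
qed simp

lemma Fu_eq: "Fu = (\<lambda>q. inv_gap q - q (CV 0) * q (CU 1))"
  by (rule ext) (simp add: Fu_def inv_gap_def)

lemma Fv_eq: "Fv = (\<lambda>q. - inv_gap q - q (CU 0) * q (CV 1))"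
proof
  fix q :: pt
  have "1 / (q (CU 0) - q (CV 0)) = - (1 / (q (CV 0) - q (CU 0)))"
    by (metis divide_minus_right minus_diff_eq)
  then show "Fv q = - inv_gap q - q (CU 0) * q (CV 1)"
    by (simp add: Fv_def inv_gap_def)
qed

lemma pdiff_n_Fu: "pdiff_n n Fu"
  unfolding Fu_eq by (intro pdiff_n_diff pdiff_n_mult pdiff_n_inv_gap pdiff_n_coord)

lemma pdiff_n_Fv: "pdiff_n n Fv"
  unfolding Fv_eq by (intro pdiff_n_diff pdiff_n_minus pdiff_n_mult pdiff_n_inv_gap pdiff_n_coord)

definition jet_coords :: "nat \<Rightarrow> coord set" where
  "jet_coords i = CU ` {..Suc i} \<union> CV ` {..Suc i}"

lemma finite_jet_coords: "finite (jet_coords i)"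
  by (simp add: jet_coords_def)

lemma depends_only_Fu: "depends_only Fu (jet_coords 0)"
  by (simp add: depends_only_def jet_coords_def Fu_def)

lemma depends_only_Fv: "depends_only Fv (jet_coords 0)"
  by (simp add: depends_only_def jet_coords_def Fv_def)

lemma Dx1_coef_eq: "Dx1_coef c = (case c of CX \<Rightarrow> (\<lambda>q. 1) | CY \<Rightarrow> (\<lambda>q. 0)
    | CU i \<Rightarrow> (\<lambda>q. q (CU (Suc i))) | CV i \<Rightarrow> (\<lambda>q. q (CV (Suc i))) | CPhi _ \<Rightarrow> (\<lambda>q. 0))"
  by (auto simp: Dx1_coef_def split: coord.split)

lemma Dx1_iterate_jet:
  assumes "depends_only g (jet_coords 0)" "\<And>n. pdiff_n n g"
  shows "depends_only ((Dx1 ^^ i) g) (jet_coords i) \<and> (\<forall>n. pdiff_n n ((Dx1 ^^ i) g))"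
proof (induction i)
  case (Suc i)
  define h where "h = (Dx1 ^^ i) g"
  have Dx1_h: "Dx1 h = (\<lambda>q. \<Sum>c\<in>jet_coords i. Dx1_coef c q * pd c h q)"
    unfolding Dx1_def using Suc by (intro ext vf_eq_sum finite_jet_coords) (simp add: h_def)
  have "depends_only (Dx1 h) (jet_coords (Suc i))"
    unfolding Dx1_h
  proof (intro depends_only_sum depends_only_mult)
    fix c
    assume "c \<in> jet_coords i"
    then show "depends_only (Dx1_coef c) (jet_coords (Suc i))"
      by (auto simp: Dx1_coef_eq jet_coords_def depends_only_const intro!: depends_only_coord)
    have "jet_coords i \<subseteq> jet_coords (Suc i)"
      by (auto simp: jet_coords_def)
    then show "depends_only (pd c h) (jet_coords (Suc i))"
      using Suc by (intro depends_only_mono[OF depends_only_pd]) (auto simp: h_def)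
  qed
  moreover have "pdiff_n n (Dx1 h)" for n
  proof -
    have "pdiff_n n (pd c h)" for c
      using Suc[THEN conjunct2, rule_format, of "Suc n"] by (simp add: h_def)
    moreover have "pdiff_n n (Dx1_coef c)" for c
      by (simp add: Dx1_coef_eq pdiff_n_const pdiff_n_coord split: coord.split)
    ultimately show ?thesis
      unfolding Dx1_h by (intro pdiff_n_sum finite_jet_coords pdiff_n_mult)
  qed
  ultimately show ?case
    by (simp add: h_def)
qed (use assms in simp)

lemma Dx1_iterate_Fu:
  "depends_only ((Dx1 ^^ i) Fu) (jet_coords i)" "pdiff_n n ((Dx1 ^^ i) Fu)"
  using Dx1_iterate_jet[OF depends_only_Fu pdiff_n_Fu] by blast+

lemma Dx1_iterate_Fv:
  "depends_only ((Dx1 ^^ i) Fv) (jet_coords i)" "pdiff_n n ((Dx1 ^^ i) Fv)"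
  using Dx1_iterate_jet[OF depends_only_Fv pdiff_n_Fv] by blast+

section \<open>Symmetry of second partial derivatives\<close>

lemma second_difference_mvt:
  fixes g g_s g_st :: "real \<Rightarrow> real \<Rightarrow> real"
  assumes h: "0 < h"
    and g_s: "\<And>s t. a \<le> s \<Longrightarrow> s \<le> a + h \<Longrightarrow> b \<le> t \<Longrightarrow> t \<le> b + h \<Longrightarrow>
        ((\<lambda>s'. g s' t) has_real_derivative g_s s t) (at s)"
    and g_st: "\<And>s t. a \<le> s \<Longrightarrow> s \<le> a + h \<Longrightarrow> b \<le> t \<Longrightarrow> t \<le> b + h \<Longrightarrow>
        ((\<lambda>t'. g_s s t') has_real_derivative g_st s t) (at t)"
  shows "\<exists>\<xi> \<eta>. a < \<xi> \<and> \<xi> < a + h \<and> b < \<eta> \<and> \<eta> < b + h \<and>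
      g (a + h) (b + h) - g (a + h) b - g a (b + h) + g a b = h * h * g_st \<xi> \<eta>"
proof -
  have "\<exists>\<xi>. a < \<xi> \<and> \<xi> < a + h \<and>
      (g (a + h) (b + h) - g (a + h) b) - (g a (b + h) - g a b) =
      (a + h - a) * (g_s \<xi> (b + h) - g_s \<xi> b)"
    using h by (intro MVT2) (auto intro!: DERIV_diff g_s)
  then obtain \<xi> where \<xi>: "a < \<xi>" "\<xi> < a + h"
    and "g (a + h) (b + h) - g (a + h) b - g a (b + h) + g a b = h * (g_s \<xi> (b + h) - g_s \<xi> b)"
    by auto
  moreover have "\<exists>\<eta>. b < \<eta> \<and> \<eta> < b + h \<and> g_s \<xi> (b + h) - g_s \<xi> b = (b + h - b) * g_st \<xi> \<eta>"
    using h \<xi> by (intro MVT2) (auto intro!: g_st)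
  then obtain \<eta> where "b < \<eta>" "\<eta> < b + h" "g_s \<xi> (b + h) - g_s \<xi> b = h * g_st \<xi> \<eta>"
    by auto
  ultimately show ?thesis
    by (intro exI[of _ \<xi>] exI[of _ \<eta>]) simp
qed

lemma tendsto_box_values:
  fixes F :: "real \<Rightarrow> real" and G :: "real \<Rightarrow> real \<Rightarrow> real"
  assumes e: "0 < e"
    and box_value: "\<And>h. 0 < h \<Longrightarrow> h < e \<Longrightarrow>
      \<exists>\<xi> \<eta>. a < \<xi> \<and> \<xi> < a + h \<and> b < \<eta> \<and> \<eta> < b + h \<and> F h = G \<xi> \<eta>"
    and cont: "isCont (\<lambda>z. G (fst z) (snd z)) (a, b)"
  shows "(F \<longlongrightarrow> G a b) (at_right 0)"
proof -
  obtain \<xi> \<eta> where box: "\<And>h. 0 < h \<Longrightarrow> h < e \<Longrightarrow>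
      a < \<xi> h \<and> \<xi> h < a + h \<and> b < \<eta> h \<and> \<eta> h < b + h \<and> F h = G (\<xi> h) (\<eta> h)"
    using box_value by metis
  have small: "eventually (\<lambda>h. 0 < h \<and> h < e) (at_right 0)"
    using eventually_at_right_real[OF e] by (simp add: eventually_mono)
  have squeeze: "(x \<longlongrightarrow> c) (at_right 0)"
    if "\<And>h. 0 < h \<Longrightarrow> h < e \<Longrightarrow> c < x h \<and> x h < c + h" for x and c :: real
  proof (rule tendsto_sandwich[of "\<lambda>h. c" _ _ "\<lambda>h. c + h"])
    show "eventually (\<lambda>h. c \<le> x h) (at_right 0)" "eventually (\<lambda>h. x h \<le> c + h) (at_right 0)"
      using small by (auto elim!: eventually_mono dest: that)
    show "((\<lambda>h. c + h) \<longlongrightarrow> c) (at_right 0)"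
      using tendsto_add[OF tendsto_const tendsto_ident_at, of c 0 "{0<..}"] by simp
  qed simp
  have "((\<lambda>h. G (\<xi> h) (\<eta> h)) \<longlongrightarrow> G a b) (at_right 0)"
    using isCont_tendsto_compose[OF cont tendsto_Pair[OF squeeze squeeze]] box by auto
  moreover have "eventually (\<lambda>h. G (\<xi> h) (\<eta> h) = F h) (at_right 0)"
    using small by (rule eventually_mono) (simp add: box)
  ultimately show ?thesis
    by (rule Lim_transform_eventually)
qed

lemma mixed_partials_commute:
  fixes g g_s g_t g_st g_ts :: "real \<Rightarrow> real \<Rightarrow> real"
  assumes e: "0 < e"
    and g_s: "\<And>s t. \<bar>s - a\<bar> < e \<Longrightarrow> \<bar>t - b\<bar> < e \<Longrightarrow> ((\<lambda>s'. g s' t) has_real_derivative g_s s t) (at s)"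
    and g_t: "\<And>s t. \<bar>s - a\<bar> < e \<Longrightarrow> \<bar>t - b\<bar> < e \<Longrightarrow> ((\<lambda>t'. g s t') has_real_derivative g_t s t) (at t)"
    and g_st: "\<And>s t. \<bar>s - a\<bar> < e \<Longrightarrow> \<bar>t - b\<bar> < e \<Longrightarrow> ((\<lambda>t'. g_s s t') has_real_derivative g_st s t) (at t)"
    and g_ts: "\<And>s t. \<bar>s - a\<bar> < e \<Longrightarrow> \<bar>t - b\<bar> < e \<Longrightarrow> ((\<lambda>s'. g_t s' t) has_real_derivative g_ts s t) (at s)"
    and cont_st: "isCont (\<lambda>z. g_st (fst z) (snd z)) (a, b)"
    and cont_ts: "isCont (\<lambda>z. g_ts (fst z) (snd z)) (a, b)"
  shows "g_st a b = g_ts a b"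
proof -
  define q where "q h = (g (a + h) (b + h) - g (a + h) b - g a (b + h) + g a b) / (h * h)" for h
  have "(q \<longlongrightarrow> g_st a b) (at_right 0)"
  proof (rule tendsto_box_values[OF e _ cont_st])
    fix h :: real
    assume h: "0 < h" "h < e"
    then have "\<exists>\<xi> \<eta>. a < \<xi> \<and> \<xi> < a + h \<and> b < \<eta> \<and> \<eta> < b + h \<and>
        g (a + h) (b + h) - g (a + h) b - g a (b + h) + g a b = h * h * g_st \<xi> \<eta>"
      by (intro second_difference_mvt) (auto intro!: g_s g_st)
    then obtain \<xi> \<eta> where "a < \<xi>" "\<xi> < a + h" "b < \<eta>" "\<eta> < b + h"
        and "g (a + h) (b + h) - g (a + h) b - g a (b + h) + g a b = h * h * g_st \<xi> \<eta>"
      by blast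
    moreover from this(5) have "q h = g_st \<xi> \<eta>"
      using h by (simp add: q_def)
    ultimately show "\<exists>\<xi> \<eta>. a < \<xi> \<and> \<xi> < a + h \<and> b < \<eta> \<and> \<eta> < b + h \<and> q h = g_st \<xi> \<eta>"
      by blast
  qed
  moreover have "(q \<longlongrightarrow> g_ts a b) (at_right 0)"
  proof (rule tendsto_box_values[OF e _ cont_ts])
    fix h :: real
    assume h: "0 < h" "h < e"
    then have "\<exists>\<eta> \<xi>. b < \<eta> \<and> \<eta> < b + h \<and> a < \<xi> \<and> \<xi> < a + h \<and>
        g (a + h) (b + h) - g a (b + h) - g (a + h) b + g a b = h * h * g_ts \<xi> \<eta>"
      by (intro second_difference_mvt[of h b a "\<lambda>t s. g s t" "\<lambda>t s. g_t s t" "\<lambda>t s. g_ts s t"])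
        (auto intro!: g_t g_ts)
    then obtain \<xi> \<eta> where "a < \<xi>" "\<xi> < a + h" "b < \<eta>" "\<eta> < b + h"
        and "g (a + h) (b + h) - g a (b + h) - g (a + h) b + g a b = h * h * g_ts \<xi> \<eta>"
      by blast
    moreover from this(5) have "q h = g_ts \<xi> \<eta>"
      using h by (simp add: q_def algebra_simps)
    ultimately show "\<exists>\<xi> \<eta>. a < \<xi> \<and> \<xi> < a + h \<and> b < \<eta> \<and> \<eta> < b + h \<and> q h = g_ts \<xi> \<eta>"
      by blast
  qed
  ultimately show ?thesis
    by (rule tendsto_unique[rotated]) simp
qed

lemma in_Dom_if_close:
  assumes "p \<in> Dom" "\<And>x. \<bar>q x - p x\<bar> < \<bar>p (CU 0) - p (CV 0)\<bar> / 2"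
  shows "q \<in> Dom"
proof -
  have "\<bar>q (CU 0) - p (CU 0)\<bar> < \<bar>p (CU 0) - p (CV 0)\<bar> / 2"
    "\<bar>q (CV 0) - p (CV 0)\<bar> < \<bar>p (CU 0) - p (CV 0)\<bar> / 2"
    using assms(2) by auto
  then show ?thesis
    by (auto simp: Dom_def abs_if split: if_splits)
qed

lemma pd_pd_commute:
  assumes p: "p \<in> Dom"
    and f1: "\<And>c q. q \<in> Dom \<Longrightarrow> pdiff c f q"
    and f2: "\<And>c d q. q \<in> Dom \<Longrightarrow> pdiff d (pd c f) q"
    and cont: "\<And>c d. continuous_on Dom (pd d (pd c f))"
  shows "pd d (pd c f) p = pd c (pd d f) p"
proof (cases "c = d")
  case False
  define \<gamma> where "\<gamma> s t = p(c := s, d := t)" for s t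
  define e where "e = \<bar>p (CU 0) - p (CV 0)\<bar> / 2"
  have e: "0 < e"
    using p by (simp add: e_def Dom_def)
  have \<gamma>_Dom: "\<gamma> s t \<in> Dom" if "\<bar>s - p c\<bar> < e" "\<bar>t - p d\<bar> < e" for s t
  proof (rule in_Dom_if_close[OF p])
    show "\<bar>\<gamma> s t x - p x\<bar> < \<bar>p (CU 0) - p (CV 0)\<bar> / 2" for x
      using that e unfolding e_def[symmetric] by (cases "x = d"; cases "x = c") (auto simp: \<gamma>_def)
  qed
  have \<gamma>_upd: "(\<gamma> s t)(c := s') = \<gamma> s' t" "(\<gamma> s t)(d := t') = \<gamma> s t'" "\<gamma> s t c = s" "\<gamma> s t d = t"
    for s t s' t'
    using False by (auto simp: \<gamma>_def fun_upd_twist)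
  have \<gamma>_p: "\<gamma> (p c) (p d) = p"
    by (simp add: \<gamma>_def)
  have "continuous_on UNIV (\<lambda>z. \<gamma> (fst z) (snd z) x)" for x
    by (cases "x = d"; cases "x = c") (simp_all add: \<gamma>_def continuous_on_fst continuous_on_snd)
  then have \<gamma>_cont: "continuous_on UNIV (\<lambda>z. \<gamma> (fst z) (snd z))"
    by (rule continuous_on_coordinatewise_then_product)
  define U where "U = {z. \<gamma> (fst z) (snd z) \<in> Dom}"
  have "open U"
    unfolding U_def using open_vimage[OF open_Dom \<gamma>_cont] by (simp add: vimage_def)
  have cont_\<gamma>: "isCont (\<lambda>z. F (\<gamma> (fst z) (snd z))) (p c, p d)" if "continuous_on Dom F" for F :: "pt \<Rightarrow> real"
  proof -
    have "continuous_on U (\<lambda>z. F (\<gamma> (fst z) (snd z)))"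
      using that continuous_on_subset[OF \<gamma>_cont] by (rule continuous_on_compose2) (auto simp: U_def)
    moreover have "(p c, p d) \<in> U"
      using p by (simp add: U_def \<gamma>_p)
    ultimately show ?thesis
      using \<open>open U\<close> continuous_on_eq_continuous_at by blast
  qed
  have "pd d (pd c f) (\<gamma> (p c) (p d)) = pd c (pd d f) (\<gamma> (p c) (p d))"
  proof (rule mixed_partials_commute[where g = "\<lambda>s t. f (\<gamma> s t)"
        and g_s = "\<lambda>s t. pd c f (\<gamma> s t)" and g_t = "\<lambda>s t. pd d f (\<gamma> s t)"
        and g_st = "\<lambda>s t. pd d (pd c f) (\<gamma> s t)" and g_ts = "\<lambda>s t. pd c (pd d f) (\<gamma> s t)",
        OF e])
    fix s t
    assume "\<bar>s - p c\<bar> < e" "\<bar>t - p d\<bar> < e"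
    then have st: "\<gamma> s t \<in> Dom"
      by (rule \<gamma>_Dom)
    show "((\<lambda>s'. f (\<gamma> s' t)) has_real_derivative pd c f (\<gamma> s t)) (at s)"
      using pdiff_has_pd[OF f1[where c = c, OF st]] unfolding \<gamma>_upd .
    show "((\<lambda>t'. f (\<gamma> s t')) has_real_derivative pd d f (\<gamma> s t)) (at t)"
      using pdiff_has_pd[OF f1[where c = d, OF st]] unfolding \<gamma>_upd .
    show "((\<lambda>t'. pd c f (\<gamma> s t')) has_real_derivative pd d (pd c f) (\<gamma> s t)) (at t)"
      using pdiff_has_pd[OF f2[where c = c and d = d, OF st]] unfolding \<gamma>_upd .
    show "((\<lambda>s'. pd d f (\<gamma> s' t)) has_real_derivative pd c (pd d f) (\<gamma> s t)) (at s)"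
      using pdiff_has_pd[OF f2[where c = d and d = c, OF st]] unfolding \<gamma>_upd .
  qed (intro cont_\<gamma> cont)+
  then show ?thesis
    by (simp add: \<gamma>_p)
qed simp

section \<open>Commutator of two vector fields\<close>

lemma vf_vf_eq:
  assumes S: "finite S" "depends_only f S" and T: "finite T" "S \<subseteq> T"
    and f2: "\<And>c d. pdiff d (pd c f) p"
    and Y: "\<And>c. c \<in> S \<Longrightarrow> depends_only (Y c) T" "\<And>c d. c \<in> S \<Longrightarrow> pdiff d (Y c) p"
  shows "vf X (vf Y f) p =
    (\<Sum>c\<in>S. vf X (Y c) p * pd c f p) + (\<Sum>c\<in>S. \<Sum>d\<in>S. X d p * Y c p * pd d (pd c f) p)"
proof -
  have Yf: "vf Y f = (\<lambda>q. \<Sum>c\<in>S. Y c q * pd c f q)"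
    using S by (intro ext vf_eq_sum)
  have pdf: "depends_only (pd c f) T" for c
    by (rule depends_only_pd[OF depends_only_mono[OF S(2) T(2)]])
  then have "depends_only (vf Y f) T"
    unfolding Yf using Y(1) by (intro depends_only_sum depends_only_mult)
  then have "vf X (vf Y f) p = (\<Sum>d\<in>T. X d p * pd d (vf Y f) p)"
    by (rule vf_eq_sum[OF T(1)])
  also have "\<dots> = (\<Sum>d\<in>T. \<Sum>c\<in>S. X d p * (pd d (Y c) p * pd c f p + Y c p * pd d (pd c f) p))"
  proof (intro sum.cong refl)
    fix d
    have "pd d (\<lambda>q. \<Sum>c\<in>S. Y c q * pd c f q) p = (\<Sum>c\<in>S. pd d (\<lambda>q. Y c q * pd c f q) p)"
      using S(1) by (rule pd_sum) (intro pdiff_mult Y(2) f2)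
    also have "\<dots> = (\<Sum>c\<in>S. pd d (Y c) p * pd c f p + Y c p * pd d (pd c f) p)"
      by (intro sum.cong refl pd_mult Y(2) f2)
    finally show "X d p * pd d (vf Y f) p =
        (\<Sum>c\<in>S. X d p * (pd d (Y c) p * pd c f p + Y c p * pd d (pd c f) p))"
      unfolding Yf by (simp add: sum_distrib_left)
  qed
  also have "\<dots> = (\<Sum>c\<in>S. \<Sum>d\<in>T. X d p * pd d (Y c) p * pd c f p)
      + (\<Sum>c\<in>S. \<Sum>d\<in>T. X d p * Y c p * pd d (pd c f) p)"
    by (subst sum.swap) (simp add: distrib_left sum.distrib mult.assoc)
  also have "(\<Sum>c\<in>S. \<Sum>d\<in>T. X d p * pd d (Y c) p * pd c f p) = (\<Sum>c\<in>S. vf X (Y c) p * pd c f p)"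
    by (intro sum.cong refl) (simp add: vf_eq_sum[OF T(1) Y(1)] sum_distrib_right)
  also have "(\<Sum>c\<in>S. \<Sum>d\<in>T. X d p * Y c p * pd d (pd c f) p) =
      (\<Sum>c\<in>S. \<Sum>d\<in>S. X d p * Y c p * pd d (pd c f) p)"
    by (intro sum.cong refl sum.mono_neutral_right[OF T]) (simp add: pd_outside[OF depends_only_pd[OF S(2)]])
  finally show ?thesis .
qed

lemma vf_commutator:
  assumes S: "finite S" "depends_only f S" and T: "finite T" "S \<subseteq> T"
    and f2: "\<And>c d. pdiff d (pd c f) p"
    and sym: "\<And>c d. c \<in> S \<Longrightarrow> d \<in> S \<Longrightarrow> pd d (pd c f) p = pd c (pd d f) p"
    and X: "\<And>c. c \<in> S \<Longrightarrow> depends_only (X c) T" "\<And>c d. c \<in> S \<Longrightarrow> pdiff d (X c) p"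
    and Y: "\<And>c. c \<in> S \<Longrightarrow> depends_only (Y c) T" "\<And>c d. c \<in> S \<Longrightarrow> pdiff d (Y c) p"
  shows "vf X (vf Y f) p - vf Y (vf X f) p = (\<Sum>c\<in>S. (vf X (Y c) p - vf Y (X c) p) * pd c f p)"
proof -
  have "(\<Sum>c\<in>S. \<Sum>d\<in>S. Y d p * X c p * pd d (pd c f) p) =
      (\<Sum>c\<in>S. \<Sum>d\<in>S. X d p * Y c p * pd d (pd c f) p)"
    by (subst sum.swap) (auto simp: sym intro!: sum.cong)
  then show ?thesis
    using vf_vf_eq[OF S T f2 Y] vf_vf_eq[OF S T f2 X]
    by (simp add: left_diff_distrib sum_subtractf)
qed

no_notation vec_nth (infixl \<open>$\<close> 90)
unbundle fps_syntax

definition pdiffable :: "(pt \<Rightarrow> real) \<Rightarrow> bool" where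
  "pdiffable g \<longleftrightarrow> (\<forall>c p. pdiff c g p)"

lemma pdiffable_const: "pdiffable (\<lambda>q. a)"
  by (simp add: pdiffable_def)

lemma pdiffable_coord: "pdiffable (\<lambda>q. q d)"
  by (simp add: pdiffable_def)

lemma pdiffable_minus: "pdiffable f \<Longrightarrow> pdiffable (\<lambda>q. - f q)"
  by (simp add: pdiffable_def pdiff_minus)

lemma pdiffable_diff: "pdiffable f \<Longrightarrow> pdiffable g \<Longrightarrow> pdiffable (\<lambda>q. f q - g q)"
  by (simp add: pdiffable_def pdiff_diff)

lemma pdiffable_mult: "pdiffable f \<Longrightarrow> pdiffable g \<Longrightarrow> pdiffable (\<lambda>q. f q * g q)"
  by (simp add: pdiffable_def pdiff_mult)

lemma pdiffable_sum:
  "finite I \<Longrightarrow> (\<And>i. i \<in> I \<Longrightarrow> pdiffable (f i)) \<Longrightarrow> pdiffable (\<lambda>q. \<Sum>i\<in>I. f i q)"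
  by (simp add: pdiffable_def pdiff_sum)

definition fps_pdiffable :: "(pt \<Rightarrow> real fps) \<Rightarrow> bool" where
  "fps_pdiffable F \<longleftrightarrow> (\<forall>n. pdiffable (\<lambda>q. F q $ n))"

lemma fps_pdiffable_pdiff: "fps_pdiffable F \<Longrightarrow> pdiff d (\<lambda>q. F q $ n) p"
  by (simp add: fps_pdiffable_def pdiffable_def)

lemma fps_pdiffable_const: "fps_pdiffable (\<lambda>q. F)"
  by (simp add: fps_pdiffable_def pdiffable_const)

lemma fps_pdiffable_fps_const: "pdiffable a \<Longrightarrow> fps_pdiffable (\<lambda>q. fps_const (a q))"
  unfolding fps_pdiffable_def
proof
  show "pdiffable a \<Longrightarrow> pdiffable (\<lambda>q. fps_const (a q) $ n)" for n
    by (cases "n = 0") (simp_all add: pdiffable_const)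
qed

lemma fps_pdiffable_add: "fps_pdiffable F \<Longrightarrow> fps_pdiffable G \<Longrightarrow> fps_pdiffable (\<lambda>q. F q + G q)"
  by (simp add: fps_pdiffable_def pdiffable_def pdiff_add)

lemma fps_pdiffable_diff: "fps_pdiffable F \<Longrightarrow> fps_pdiffable G \<Longrightarrow> fps_pdiffable (\<lambda>q. F q - G q)"
  by (simp add: fps_pdiffable_def pdiffable_diff)

lemma fps_pdiffable_mult: "fps_pdiffable F \<Longrightarrow> fps_pdiffable G \<Longrightarrow> fps_pdiffable (\<lambda>q. F q * G q)"
  unfolding fps_pdiffable_def fps_mult_nth by (auto intro!: pdiffable_sum pdiffable_mult)

lemma fps_inverse_nth_rec:
  fixes f :: "'a::field fps"
  assumes "f $ 0 = 1"
  shows "inverse f $ n = (if n = 0 then 1 else - (\<Sum>i=1..n. f $ i * inverse f $ (n - i)))"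
  using assms by (cases n) (simp_all add: fps_inverse_def)

lemma fps_pdiffable_inverse:
  assumes "fps_pdiffable F" "\<And>q. F q $ 0 = 1"
  shows "fps_pdiffable (\<lambda>q. inverse (F q))"
  unfolding fps_pdiffable_def
proof
  fix n
  show "pdiffable (\<lambda>q. inverse (F q) $ n)"
  proof (induction n rule: less_induct)
    case (less n)
    show ?case
    proof (cases "n = 0")
      case True
      then show ?thesis
        using assms(2) by (simp add: pdiffable_const)
    next
      case False
      have "pdiffable (\<lambda>q. F q $ i * inverse (F q) $ (n - i))" if "i \<in> {1..n}" for i
        using assms(1) that less by (intro pdiffable_mult) (auto simp: fps_pdiffable_def)
      then have "pdiffable (\<lambda>q. - (\<Sum>i=1..n. F q $ i * inverse (F q) $ (n - i)))"
        by (intro pdiffable_minus pdiffable_sum) auto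
      then show ?thesis
        using False by (simp add: fps_inverse_nth_rec[OF assms(2)])
    qed
  qed
qed

lemma lphi_nth: "lphi p $ n = (if n = 0 then 1 else if n = 1 then 0
    else if n = 2 then - p CY else if n = 3 then - p CX else p (CPhi (n - 1)))"
  by (simp add: lphi_def)

lemma fps_pdiffable_lphi: "fps_pdiffable lphi"
  unfolding fps_pdiffable_def lphi_nth
proof
  show "pdiffable (\<lambda>q. if n = 0 then 1 else if n = 1 then 0 else if n = 2 then - q CY
      else if n = 3 then - q CX else q (CPhi (n - 1)))" for n
    by (cases "n = 0"; cases "n = 1"; cases "n = 2"; cases "n = 3")
       (simp_all add: pdiffable_const pdiffable_coord pdiffable_minus)
qed

definition eq_upto :: "nat \<Rightarrow> 'a fps \<Rightarrow> 'a fps \<Rightarrow> bool" where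
  "eq_upto j F G \<longleftrightarrow> (\<forall>n\<le>j. F $ n = G $ n)"

lemma eq_upto_refl: "eq_upto j F F"
  by (simp add: eq_upto_def)

lemma eq_upto_add:
  fixes F G :: "'a::comm_ring_1 fps"
  shows "eq_upto j F G \<Longrightarrow> eq_upto j F' G' \<Longrightarrow> eq_upto j (F + F') (G + G')"
  by (simp add: eq_upto_def)

lemma eq_upto_diff:
  fixes F G :: "'a::comm_ring_1 fps"
  shows "eq_upto j F G \<Longrightarrow> eq_upto j F' G' \<Longrightarrow> eq_upto j (F - F') (G - G')"
  by (simp add: eq_upto_def)

lemma eq_upto_mult:
  fixes F G :: "'a::comm_ring_1 fps"
  shows "eq_upto j F G \<Longrightarrow> eq_upto j F' G' \<Longrightarrow> eq_upto j (F * F') (G * G')"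
  unfolding eq_upto_def fps_mult_nth by (auto intro!: sum.cong)

lemma eq_upto_inverse:
  fixes F G :: "'a::field fps"
  assumes FG: "eq_upto j F G" and F0: "F $ 0 \<noteq> 0"
  shows "eq_upto j (inverse F) (inverse G)"
proof -
  have G0: "G $ 0 \<noteq> 0"
    using FG F0 by (simp add: eq_upto_def)
  have "eq_upto j ((inverse F * G) * inverse G) ((inverse F * F) * inverse G)"
    using FG by (intro eq_upto_mult eq_upto_refl) (simp add: eq_upto_def)
  moreover have "(inverse F * G) * inverse G = inverse F"
    using G0 by (simp add: mult.assoc inverse_mult_eq_1')
  ultimately show ?thesis
    using F0 by (simp add: inverse_mult_eq_1)
qed

lemma eq_upto_cancel:
  fixes Q E :: "'a::field fps"
  assumes "eq_upto j (Q * E) 0" "Q $ 0 \<noteq> 0"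
  shows "eq_upto j E 0"
proof -
  have "eq_upto j (inverse Q * (Q * E)) (inverse Q * 0)"
    using assms(1) by (intro eq_upto_mult eq_upto_refl)
  then show ?thesis
    using assms(2) by (simp add: mult.assoc[symmetric] inverse_mult_eq_1)
qed

section \<open>The series \<open>\<phi>\<^sub>x\<close> and \<open>\<phi>\<^sub>y\<close>\<close>

definition Aser :: "pt \<Rightarrow> real fps" where
  "Aser p = lphi p - fps_const (p (CU 0)) * fps_X"

definition Bser :: "pt \<Rightarrow> real fps" where
  "Bser p = lphi p - fps_const (p (CV 0)) * fps_X"

definition Rser :: "pt \<Rightarrow> real fps" where
  "Rser p = fps_const (p (CU 0) + p (CV 0)) * fps_X ^ 2 - fps_X * lphi p"

lemma Qser_eq: "Qser p = Aser p * Bser p"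
  by (simp add: Qser_def Aser_def Bser_def)

lemma Qser_nth_0: "Qser p $ 0 = 1"
  by (simp add: Qser_def lphi_nth)

lemma the_fps_quotient:
  fixes Q G :: "'a::field fps"
  assumes "Q $ 0 \<noteq> 0"
  shows "(THE F. Q * F = G) = G * inverse Q"
proof (rule the_equality)
  show "Q * (G * inverse Q) = G"
    using assms by (simp add: mult.left_commute[of Q] inverse_mult_eq_1')
  show "F = G * inverse Q" if "Q * F = G" for F
  proof -
    have "G * inverse Q = F * (Q * inverse Q)"
      using that by (simp add: ac_simps)
    then show ?thesis
      using assms by (simp add: inverse_mult_eq_1')
  qed
qed

lemma Xser_eq: "Xser p = - (fps_X ^ 2) * inverse (Qser p)"
  unfolding Xser_def by (rule the_fps_quotient) (simp add: Qser_nth_0)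

lemma Yser_eq: "Yser p = Rser p * inverse (Qser p)"
  unfolding Yser_def Rser_def by (rule the_fps_quotient) (simp add: Qser_nth_0)

lemma Qser_Xser: "Qser p * Xser p = - (fps_X ^ 2)"
  unfolding Xser_eq using Qser_nth_0[of p]
  by (simp add: mult.left_commute[of "Qser p"] inverse_mult_eq_1')

lemma Qser_Yser: "Qser p * Yser p = Rser p"
  unfolding Yser_eq using Qser_nth_0[of p]
  by (simp add: mult.left_commute[of "Qser p"] inverse_mult_eq_1')

lemma Xser_nth_012: "Xser p $ 0 = 0" "Xser p $ Suc 0 = 0" "Xser p $ 2 = -1"
  by (simp_all add: Xser_eq fps_X_power_mult_nth Qser_nth_0)

lemma Yser_nth_012: "Yser p $ 0 = 0" "Yser p $ Suc 0 = -1" "Yser p $ 2 = 0"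
proof -
  have Q1: "Qser p $ Suc 0 = - (p (CU 0) + p (CV 0))"
    by (simp add: Qser_def fps_mult_nth_1 lphi_nth)
  have I: "inverse (Qser p) $ 0 = 1" "inverse (Qser p) $ 1 = p (CU 0) + p (CV 0)"
    using fps_inverse_nth_rec[OF Qser_nth_0, of p 1] by (simp_all add: Qser_nth_0 Q1)
  have R: "Rser p $ 0 = 0" "Rser p $ 1 = -1" "Rser p $ 2 = p (CU 0) + p (CV 0)"
    by (simp_all add: Rser_def lphi_nth fps_X_power_nth numeral_2_eq_2)
  have "(Rser p * inverse (Qser p)) $ 2 = Rser p $ 0 * inverse (Qser p) $ 2
      + Rser p $ 1 * inverse (Qser p) $ 1 + Rser p $ 2 * inverse (Qser p) $ 0"
    by (simp add: fps_mult_nth numeral_2_eq_2 sum.atLeast0_atMost_Suc)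
  then show "Yser p $ 0 = 0" "Yser p $ Suc 0 = -1" "Yser p $ 2 = 0"
    using R I by (simp_all add: Yser_eq fps_mult_nth_1)
qed

lemma fps_pdiffable_Aser: "fps_pdiffable Aser"
  unfolding Aser_def[abs_def]
  by (intro fps_pdiffable_diff fps_pdiffable_mult fps_pdiffable_lphi fps_pdiffable_fps_const
      fps_pdiffable_const pdiffable_coord)

lemma fps_pdiffable_Bser: "fps_pdiffable Bser"
  unfolding Bser_def[abs_def]
  by (intro fps_pdiffable_diff fps_pdiffable_mult fps_pdiffable_lphi fps_pdiffable_fps_const
      fps_pdiffable_const pdiffable_coord)

lemma fps_pdiffable_Qser: "fps_pdiffable Qser"
  unfolding Qser_eq[abs_def] by (intro fps_pdiffable_mult fps_pdiffable_Aser fps_pdiffable_Bser)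

lemma fps_pdiffable_Rser: "fps_pdiffable Rser"
proof -
  have "pdiffable (\<lambda>q. q (CU 0) + q (CV 0))"
    by (simp add: pdiffable_def pdiff_add)
  then show ?thesis
    unfolding Rser_def[abs_def]
    by (intro fps_pdiffable_diff fps_pdiffable_mult fps_pdiffable_lphi fps_pdiffable_fps_const
        fps_pdiffable_const)
qed

lemma fps_pdiffable_Xser: "fps_pdiffable Xser"
  unfolding Xser_eq[abs_def]
  by (intro fps_pdiffable_mult fps_pdiffable_const fps_pdiffable_inverse fps_pdiffable_Qser Qser_nth_0)

lemma fps_pdiffable_Yser: "fps_pdiffable Yser"
  unfolding Yser_eq[abs_def]
  by (intro fps_pdiffable_mult fps_pdiffable_Rser fps_pdiffable_inverse fps_pdiffable_Qser Qser_nth_0)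

lemma pdiffable_Xbar: "pdiffable (Xbar j)"
  using fps_pdiffable_Xser unfolding fps_pdiffable_def Xbar_def[abs_def] by blast

lemma pdiffable_Ybar: "pdiffable (Ybar j)"
  using fps_pdiffable_Yser unfolding fps_pdiffable_def Ybar_def[abs_def] by blast

definition phi_coords :: "nat \<Rightarrow> coord set" where
  "phi_coords j = {CX, CY, CU 0, CV 0} \<union> CPhi ` {3..<j}"

lemma finite_phi_coords: "finite (phi_coords j)"
  by (simp add: phi_coords_def)

lemma eq_upto_lphi:
  assumes "\<forall>c\<in>phi_coords j. p c = q c"
  shows "eq_upto j (lphi p) (lphi q)"
  unfolding eq_upto_def
proof (intro allI impI)
  fix n
  assume n: "n \<le> j"
  have "p (CPhi (n - 1)) = q (CPhi (n - 1))" if "4 \<le> n"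
  proof -
    have "CPhi (n - 1) \<in> phi_coords j"
      unfolding phi_coords_def using n that by (intro UnI2 imageI) auto
    then show ?thesis
      using assms by blast
  qed
  moreover have "p CX = q CX" "p CY = q CY"
    using assms by (auto simp: phi_coords_def)
  ultimately show "lphi p $ n = lphi q $ n"
    unfolding lphi_nth by auto
qed

lemma eq_upto_Qser_Rser:
  assumes "\<forall>c\<in>phi_coords j. p c = q c"
  shows "eq_upto j (Qser p) (Qser q)" "eq_upto j (Rser p) (Rser q)"
proof -
  have "p (CU 0) = q (CU 0)" "p (CV 0) = q (CV 0)"
    using assms by (auto simp: phi_coords_def)
  then show "eq_upto j (Qser p) (Qser q)" "eq_upto j (Rser p) (Rser q)"
    unfolding Qser_def Rser_def
    by (auto intro!: eq_upto_mult eq_upto_diff eq_upto_lphi[OF assms] eq_upto_refl)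
qed

lemma depends_only_Xbar_Ybar:
  assumes "n \<le> j"
  shows "depends_only (Xbar n) (phi_coords j)" "depends_only (Ybar n) (phi_coords j)"
proof -
  have "eq_upto j (Xser p) (Xser q) \<and> eq_upto j (Yser p) (Yser q)"
    if "\<forall>c\<in>phi_coords j. p c = q c" for p q
    unfolding Xser_eq Yser_eq using eq_upto_Qser_Rser[OF that]
    by (intro conjI eq_upto_mult eq_upto_refl eq_upto_inverse) (simp_all add: Qser_nth_0)
  then show "depends_only (Xbar n) (phi_coords j)" "depends_only (Ybar n) (phi_coords j)"
    using assms unfolding depends_only_def Xbar_def Ybar_def eq_upto_def by blast+
qed

definition fps_pd :: "coord \<Rightarrow> (pt \<Rightarrow> real fps) \<Rightarrow> pt \<Rightarrow> real fps" where
  "fps_pd d F p = Abs_fps (\<lambda>n. pd d (\<lambda>q. F q $ n) p)"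

lemma fps_pd_nth [simp]: "fps_pd d F p $ n = pd d (\<lambda>q. F q $ n) p"
  by (simp add: fps_pd_def)

lemma fps_pd_mult:
  assumes "fps_pdiffable F" "fps_pdiffable G"
  shows "fps_pd d (\<lambda>q. F q * G q) p = fps_pd d F p * G p + F p * fps_pd d G p"
proof (rule fps_ext)
  fix n
  have "fps_pd d (\<lambda>q. F q * G q) p $ n = pd d (\<lambda>q. \<Sum>i=0..n. F q $ i * G q $ (n - i)) p"
    by (simp add: fps_mult_nth)
  also have "\<dots> = (\<Sum>i=0..n. pd d (\<lambda>q. F q $ i * G q $ (n - i)) p)"
    by (rule pd_sum) (auto intro!: pdiff_mult fps_pdiffable_pdiff assms)
  also have "\<dots> = (\<Sum>i=0..n. pd d (\<lambda>q. F q $ i) p * G p $ (n - i) + F p $ i * pd d (\<lambda>q. G q $ (n - i)) p)"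
    by (intro sum.cong refl pd_mult fps_pdiffable_pdiff assms)
  also have "\<dots> = (fps_pd d F p * G p + F p * fps_pd d G p) $ n"
    by (simp add: fps_mult_nth sum.distrib)
  finally show "fps_pd d (\<lambda>q. F q * G q) p $ n = (fps_pd d F p * G p + F p * fps_pd d G p) $ n" .
qed

definition fps_vf :: "(coord \<Rightarrow> real) \<Rightarrow> coord set \<Rightarrow> (pt \<Rightarrow> real fps) \<Rightarrow> pt \<Rightarrow> real fps" where
  "fps_vf w T F p = (\<Sum>d\<in>T. fps_const (w d) * fps_pd d F p)"

lemma fps_vf_nth: "fps_vf w T F p $ n = (\<Sum>d\<in>T. w d * pd d (\<lambda>q. F q $ n) p)"
  by (simp add: fps_vf_def fps_sum_nth)

lemma fps_vf_mult:
  assumes "fps_pdiffable F" "fps_pdiffable G"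
  shows "fps_vf w T (\<lambda>q. F q * G q) p = fps_vf w T F p * G p + F p * fps_vf w T G p"
  unfolding fps_vf_def fps_pd_mult[OF assms]
  by (simp add: distrib_left sum.distrib sum_distrib_right sum_distrib_left mult.assoc
      mult.left_commute)

lemma fps_vf_linear:
  assumes "fps_pdiffable F" "fps_pdiffable G"
  shows "fps_vf w T (\<lambda>q. F q + G q) p = fps_vf w T F p + fps_vf w T G p"
    and "fps_vf w T (\<lambda>q. F q - G q) p = fps_vf w T F p - fps_vf w T G p"
  using assms by (auto intro!: fps_ext simp: fps_vf_nth pd_add pd_diff fps_pdiffable_pdiff
      sum.distrib sum_subtractf algebra_simps)

lemma fps_vf_const: "fps_vf w T (\<lambda>q. F) p = 0"
  by (rule fps_ext) (simp add: fps_vf_nth)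

lemma fps_vf_coord:
  assumes "finite T"
  shows "fps_vf w T (\<lambda>q. fps_const (q c) * F) p = fps_const (if c \<in> T then w c else 0) * F"
proof -
  have "fps_vf w T (\<lambda>q. fps_const (q c)) p = fps_const (if c \<in> T then w c else 0)"
  proof (rule fps_ext)
    fix n
    have "(\<Sum>d\<in>T. w d * pd d (\<lambda>q. q c) p) = (if c \<in> T then w c else 0)"
      using assms by (simp add: if_distrib[of "\<lambda>x. _ * x"] sum.delta' cong: if_cong)
    then show "fps_vf w T (\<lambda>q. fps_const (q c)) p $ n = fps_const (if c \<in> T then w c else 0) $ n"
      by (cases "n = 0") (simp_all add: fps_vf_nth)
  qed
  then show ?thesis
    by (simp add: fps_vf_mult fps_pdiffable_fps_const pdiffable_coord fps_pdiffable_const fps_vf_const)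
qed

text \<open>Here \<open>lphi p\<close> is lambda phi, and x, y enter phi as its coefficients -phi^(2), -phi^(1):
  the lemma says that the vector field maps phi to F up to order j.\<close>

lemma fps_vf_lphi:
  assumes F: "F $ 0 = 0" "F $ 1 = - w CY" "F $ 2 = - w CX" "\<And>i. 3 \<le> i \<Longrightarrow> i < j \<Longrightarrow> F $ i = w (CPhi i)"
  shows "eq_upto j (fps_vf w (phi_coords j) lphi p) (fps_X * F)"
  unfolding eq_upto_def
proof (intro allI impI)
  fix n
  assume n: "n \<le> j"
  have fin: "finite (phi_coords j)"
    by (rule finite_phi_coords)
  have XY: "CX \<in> phi_coords j" "CY \<in> phi_coords j"
    by (auto simp: phi_coords_def)
  have sum_coord: "(\<Sum>d\<in>phi_coords j. w d * pd d (\<lambda>q. q c) p) = w c" if "c \<in> phi_coords j" for c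
    using fin that by (simp add: if_distrib[of "\<lambda>x. _ * x"] sum.delta' cong: if_cong)
  consider "n = 0" | "n = 1" | "n = 2" | "n = 3" | "4 \<le> n"
    by linarith
  then show "fps_vf w (phi_coords j) lphi p $ n = (fps_X * F) $ n"
  proof cases
    case 5
    then have "CPhi (n - 1) \<in> phi_coords j"
      unfolding phi_coords_def using n by (intro UnI2 imageI) auto
    then show ?thesis
      using 5 n F(4)[of "n - 1"] sum_coord by (simp add: fps_vf_nth lphi_nth)
  qed (use F sum_coord XY in \<open>simp_all add: fps_vf_nth lphi_nth pd_minus sum_negf\<close>)
qed

section \<open>Compatibility of \<open>\<phi>\<^sub>x\<close> and \<open>\<phi>\<^sub>y\<close>\<close>

lemma fps_pdiffable_coord_X: "fps_pdiffable (\<lambda>q. fps_const (q c) * fps_X ^ n)"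
  by (intro fps_pdiffable_mult fps_pdiffable_fps_const pdiffable_coord fps_pdiffable_const)

lemma fps_vf_Aser_Bser:
  assumes "finite T" "CU 0 \<in> T" "CV 0 \<in> T"
  shows "fps_vf w T Aser p = fps_vf w T lphi p - fps_const (w (CU 0)) * fps_X"
    and "fps_vf w T Bser p = fps_vf w T lphi p - fps_const (w (CV 0)) * fps_X"
  using assms fps_pdiffable_coord_X[of _ 1]
  by (simp_all add: Aser_def[abs_def] Bser_def[abs_def] fps_vf_linear fps_pdiffable_lphi fps_vf_coord)

lemma fps_vf_Rser:
  assumes "finite T" "CU 0 \<in> T" "CV 0 \<in> T"
  shows "fps_vf w T Rser p = fps_const (w (CU 0) + w (CV 0)) * fps_X ^ 2 - fps_X * fps_vf w T lphi p"
proof -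
  have Rser_eq: "Rser = (\<lambda>q. fps_const (q (CU 0)) * fps_X ^ 2 + fps_const (q (CV 0)) * fps_X ^ 2
      - fps_X * lphi q)"
    by (rule ext) (simp only: Rser_def fps_const_add[symmetric] distrib_right)
  have "fps_pdiffable (\<lambda>q. fps_X * lphi q)"
    by (intro fps_pdiffable_mult fps_pdiffable_const fps_pdiffable_lphi)
  then show ?thesis
    unfolding Rser_eq using assms fps_pdiffable_coord_X[of _ 2]
    by (simp add: fps_vf_linear fps_pdiffable_add fps_vf_coord fps_vf_mult fps_pdiffable_const
        fps_pdiffable_lphi fps_vf_const distrib_right smult_add_left)
qed

lemma fps_vf_Qser_Xser: "fps_vf w T Qser p * Xser p + Qser p * fps_vf w T Xser p = 0"
proof -
  have "fps_vf w T (\<lambda>q. Qser q * Xser q) p = 0"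
    by (simp add: Qser_Xser fps_vf_const)
  then show ?thesis
    by (simp add: fps_vf_mult fps_pdiffable_Qser fps_pdiffable_Xser)
qed

lemma fps_vf_Qser_Yser: "fps_vf w T Qser p * Yser p + Qser p * fps_vf w T Yser p = fps_vf w T Rser p"
  using fps_vf_mult[OF fps_pdiffable_Qser fps_pdiffable_Yser, of w T p] by (simp add: Qser_Yser)

lemma derivation_of_quotients:
  fixes Q XY YX XR XQ YQ Xs Ys R X :: "'a::idom"
  assumes "XQ * Ys + Q * XY = XR" "YQ * Xs + Q * YX = 0" "Q * Xs = - (X ^ 2)" "Q * Ys = R"
  shows "Q * (Q * (XY - YX)) = Q * XR - XQ * R - YQ * X ^ 2"
proof -
  have "Q * (Q * (XY - YX)) = Q * (Q * XY) - Q * (Q * YX)"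
    by (simp add: algebra_simps)
  also have "Q * XY = XR - XQ * Ys"
    using assms(1) by (simp add: algebra_simps)
  also have "Q * YX = - (YQ * Xs)"
    using assms(2) by (simp add: eq_neg_iff_add_eq_0 add.commute)
  finally have "Q * (Q * (XY - YX)) = Q * XR - XQ * (Q * Ys) + YQ * (Q * Xs)"
    by (simp add: algebra_simps)
  then show ?thesis
    using assms(3,4) by (simp add: algebra_simps)
qed

definition bracket_numerator :: "pt \<Rightarrow> real fps \<Rightarrow> real fps \<Rightarrow> real fps" where
  "bracket_numerator p a b =
    Qser p * (fps_const (p (CU 1) + p (CV 1)) * fps_X ^ 2 - fps_X * a)
    - ((a - fps_const (p (CU 1)) * fps_X) * Bser p + Aser p * (a - fps_const (p (CV 1)) * fps_X)) * Rser p
    - ((b - fps_const (Fu p) * fps_X) * Bser p + Aser p * (b - fps_const (Fv p) * fps_X)) * fps_X ^ 2"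

lemma Qser_sq_bracket:
  fixes k :: enat and p :: pt
  assumes "finite T" "CU 0 \<in> T" "CV 0 \<in> T"
  defines "Dx F \<equiv> fps_vf (\<lambda>d. Dxb_coef k d p) T F p" and "Dy F \<equiv> fps_vf (\<lambda>d. Dyb_coef k d p) T F p"
  shows "Qser p * (Qser p * (Dx Yser - Dy Xser)) = bracket_numerator p (Dx lphi) (Dy lphi)"
proof -
  have "Dx Qser = (Dx lphi - fps_const (p (CU 1)) * fps_X) * Bser p
      + Aser p * (Dx lphi - fps_const (p (CV 1)) * fps_X)"
    "Dy Qser = (Dy lphi - fps_const (Fu p) * fps_X) * Bser p
      + Aser p * (Dy lphi - fps_const (Fv p) * fps_X)"
    unfolding Dx_def Dy_def Qser_eq[abs_def] using assms(1-3)
    by (simp_all add: fps_vf_mult fps_pdiffable_Aser fps_pdiffable_Bser fps_vf_Aser_Bser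
        Dxb_coef_def Dyb_coef_def)
  moreover have "Dx Rser = fps_const (p (CU 1) + p (CV 1)) * fps_X ^ 2 - fps_X * Dx lphi"
    unfolding Dx_def using assms(1-3) by (simp add: fps_vf_Rser Dxb_coef_def)
  moreover have "Qser p * (Qser p * (Dx Yser - Dy Xser))
      = Qser p * Dx Rser - Dx Qser * Rser p - Dy Qser * fps_X ^ 2"
    using fps_vf_Qser_Yser fps_vf_Qser_Xser Qser_Xser Qser_Yser
    by (intro derivation_of_quotients) (simp_all add: Dx_def Dy_def)
  ultimately show ?thesis
    by (simp add: bracket_numerator_def)
qed

lemma eq_upto_bracket_numerator:
  "eq_upto j a a' \<Longrightarrow> eq_upto j b b' \<Longrightarrow>
    eq_upto j (bracket_numerator p a b) (bracket_numerator p a' b')"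
  unfolding bracket_numerator_def by (intro eq_upto_diff eq_upto_add eq_upto_mult eq_upto_refl)

text \<open>With A B = Q, the left-hand side is Q times \<open>bracket_numerator\<close> at D_x phi = phi_x and
  D_y phi = phi_y, where D_y u = W - v u_x and D_y v = -W - u v_x. The system enters only through
  W = 1/(v - u), which makes the right-hand side vanish.\<close>

lemma compatibility_identity:
  fixes A B L R X u v u1 v1 W Xs Ys :: "'a::idom"
  assumes AB: "A = L - u * X" "B = L - v * X" and R: "R = (u + v) * X ^ 2 - X * L"
    and Xs: "A * B * Xs = - (X ^ 2)" and Ys: "A * B * Ys = R"
  shows "A * B * (A * B * ((u1 + v1) * X ^ 2 - X * (X * Xs))
      - ((X * Xs - u1 * X) * B + A * (X * Xs - v1 * X)) * R
      - ((X * Ys - (W - v * u1) * X) * B + A * (X * Ys - (- W - u * v1) * X)) * X ^ 2)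
    = A * B * X ^ 4 * (1 - W * (v - u))"
proof -
  have "A * B * (A * B * ((u1 + v1) * X ^ 2 - X * (X * Xs))
      - ((X * Xs - u1 * X) * B + A * (X * Xs - v1 * X)) * R
      - ((X * Ys - (W - v * u1) * X) * B + A * (X * Ys - (- W - u * v1) * X)) * X ^ 2)
    = A * B * A * B * (u1 + v1) * X ^ 2 - X ^ 2 * (A * B) * (A * B * Xs)
      - ((X * (A * B * Xs) - A * B * u1 * X) * B + A * (X * (A * B * Xs) - A * B * v1 * X)) * R
      - ((X * (A * B * Ys) - A * B * (W - v * u1) * X) * B
        + A * (X * (A * B * Ys) - A * B * (- W - u * v1) * X)) * X ^ 2"
    by algebra
  also have "\<dots> = A * B * X ^ 4 * (1 - W * (v - u))"
    unfolding Xs Ys unfolding AB R by algebra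
  finally show ?thesis .
qed

lemma bracket_numerator_phi:
  assumes "p \<in> Dom"
  shows "bracket_numerator p (fps_X * Xser p) (fps_X * Yser p) = 0"
proof -
  define X L A B R where "X = (fps_X :: real fps)" and "L = lphi p" and "A = Aser p"
    and "B = Bser p" and "R = Rser p"
  define u v u1 v1 W where "u = fps_const (p (CU 0))" and "v = fps_const (p (CV 0))"
    and "u1 = fps_const (p (CU 1))" and "v1 = fps_const (p (CV 1))" and "W = fps_const (inv_gap p)"
  have FuFv: "fps_const (Fu p) = W - v * u1" "fps_const (Fv p) = - W - u * v1"
    by (simp_all add: W_def u_def v_def u1_def v1_def Fu_eq Fv_eq)
  have "Qser p * bracket_numerator p (X * Xser p) (X * Yser p) = A * B * X ^ 4 * (1 - W * (v - u))"
    unfolding bracket_numerator_def Qser_eq A_def[symmetric] B_def[symmetric] R_def[symmetric]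
      X_def[symmetric] u1_def[symmetric] v1_def[symmetric] fps_const_add[symmetric] FuFv
  proof (rule compatibility_identity)
    show "A = L - u * X" "B = L - v * X"
      by (simp_all add: A_def B_def Aser_def Bser_def L_def u_def v_def X_def)
    show "R = (u + v) * X ^ 2 - X * L"
      by (simp add: R_def Rser_def u_def v_def X_def L_def)
    show "A * B * Xser p = - (X ^ 2)" "A * B * Yser p = R"
      using Qser_Xser[of p] Qser_Yser[of p] by (simp_all add: A_def B_def Qser_eq X_def R_def)
  qed
  moreover have "W * (v - u) = 1"
    using assms by (simp add: W_def u_def v_def inv_gap_def Dom_def)
  moreover have "Qser p \<noteq> 0"
    using Qser_nth_0[of p] by auto
  ultimately show ?thesis
    by (simp add: X_def)
qed

lemma allowed_CPhi:
  assumes "3 \<le> i" "i < j" "enat j \<le> k + 1"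
  shows "allowed k (CPhi i)"
proof -
  have "enat i \<le> enat j"
    using assms(2) by simp
  then show ?thesis
    using order_trans[OF _ assms(3)] assms(1) by (simp add: allowed_def)
qed

lemma Dxb_Ybar_eq_Dyb_Xbar:
  assumes p: "p \<in> Dom" and j: "enat j \<le> k + 1"
  shows "Dxb k (Ybar j) p = Dyb k (Xbar j) p"
proof -
  define T where "T = phi_coords j"
  define Dx where "Dx F = fps_vf (\<lambda>d. Dxb_coef k d p) T F p" for F
  define Dy where "Dy F = fps_vf (\<lambda>d. Dyb_coef k d p) T F p" for F
  have T: "finite T" "CU 0 \<in> T" "CV 0 \<in> T"
    by (auto simp: T_def phi_coords_def)
  have "Dxb k (Ybar j) p = (\<Sum>d\<in>T. Dxb_coef k d p * pd d (Ybar j) p)"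
    unfolding Dxb_def T_def by (rule vf_eq_sum[OF finite_phi_coords depends_only_Xbar_Ybar(2)[OF order_refl]])
  then have lhs: "Dxb k (Ybar j) p = Dx Yser $ j"
    by (simp add: Dx_def fps_vf_nth Ybar_def[abs_def])
  have "Dyb k (Xbar j) p = (\<Sum>d\<in>T. Dyb_coef k d p * pd d (Xbar j) p)"
    unfolding Dyb_def T_def by (rule vf_eq_sum[OF finite_phi_coords depends_only_Xbar_Ybar(1)[OF order_refl]])
  then have rhs: "Dyb k (Xbar j) p = Dy Xser $ j"
    by (simp add: Dy_def fps_vf_nth Xbar_def[abs_def])
  have "eq_upto j (Dx lphi) (fps_X * Xser p)" "eq_upto j (Dy lphi) (fps_X * Yser p)"
    unfolding Dx_def Dy_def T_def using j
    by (intro fps_vf_lphi;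
        simp add: Xser_nth_012 Yser_nth_012 Dxb_coef_def Dyb_coef_def allowed_CPhi Xbar_def Ybar_def)+
  then have "eq_upto j (bracket_numerator p (Dx lphi) (Dy lphi)) 0"
    using bracket_numerator_phi[OF p] eq_upto_bracket_numerator by metis
  then have "eq_upto j (Qser p * (Qser p * (Dx Yser - Dy Xser))) 0"
    unfolding Dx_def Dy_def Qser_sq_bracket[OF T] .
  then have "eq_upto j (Qser p * (Dx Yser - Dy Xser)) 0"
    by (rule eq_upto_cancel) (simp add: Qser_nth_0)
  then have "eq_upto j (Dx Yser - Dy Xser) 0"
    by (rule eq_upto_cancel) (simp add: Qser_nth_0)
  then show ?thesis
    unfolding lhs rhs by (simp add: eq_upto_def)
qed

lemma smooth_pdiff:
  assumes "smooth f" "q \<in> Dom"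
  shows "pdiff c f q" "pdiff d (pd c f) q"
proof -
  have "smooth_n (Suc (Suc 0)) f"
    using assms(1) unfolding smooth_def by blast
  then show "pdiff c f q" "pdiff d (pd c f) q"
    using assms(2) unfolding pdiff_def by simp_all
qed

lemma smooth_continuous_on_pd2: "smooth f \<Longrightarrow> continuous_on Dom (pd d (pd c f))"
  unfolding smooth_def by (metis smooth_n.simps(2))

definition coef_coords :: "coord \<Rightarrow> coord set" where
  "coef_coords c = (case c of CU i \<Rightarrow> jet_coords i | CV i \<Rightarrow> jet_coords i | CPhi j \<Rightarrow> phi_coords j | _ \<Rightarrow> {})"

lemma finite_coef_coords: "finite (coef_coords c)"
  by (simp add: coef_coords_def finite_jet_coords finite_phi_coords split: coord.split)

lemma Dxb_coef_eq:
  "allowed k c \<Longrightarrow> Dxb_coef k c = (case c of CX \<Rightarrow> (\<lambda>q. 1) | CY \<Rightarrow> (\<lambda>q. 0)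
    | CU i \<Rightarrow> (\<lambda>q. q (CU (Suc i))) | CV i \<Rightarrow> (\<lambda>q. q (CV (Suc i))) | CPhi j \<Rightarrow> Xbar j)"
  by (rule ext, cases c) (auto simp: Dxb_coef_def)

lemma Dyb_coef_eq:
  "allowed k c \<Longrightarrow> Dyb_coef k c = (case c of CX \<Rightarrow> (\<lambda>q. 0) | CY \<Rightarrow> (\<lambda>q. 1)
    | CU i \<Rightarrow> (Dx1 ^^ i) Fu | CV i \<Rightarrow> (Dx1 ^^ i) Fv | CPhi j \<Rightarrow> Ybar j)"
  by (rule ext, cases c) (auto simp: Dyb_coef_def)

lemma depends_only_Dxb_coef: "allowed k c \<Longrightarrow> depends_only (Dxb_coef k c) (coef_coords c)"
  by (auto simp: Dxb_coef_eq coef_coords_def depends_only_const jet_coords_def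
      intro!: depends_only_coord depends_only_Xbar_Ybar split: coord.split)

lemma depends_only_Dyb_coef: "allowed k c \<Longrightarrow> depends_only (Dyb_coef k c) (coef_coords c)"
  by (auto simp: Dyb_coef_eq coef_coords_def depends_only_const Dx1_iterate_Fu Dx1_iterate_Fv
      intro!: depends_only_Xbar_Ybar split: coord.split)

lemma pdiff_Dxb_coef: "allowed k c \<Longrightarrow> pdiff d (Dxb_coef k c) p"
  using pdiffable_Xbar by (auto simp: Dxb_coef_eq pdiffable_def split: coord.split)

lemma pdiff_Dyb_coef:
  assumes "allowed k c" "p \<in> Dom"
  shows "pdiff d (Dyb_coef k c) p"
proof -
  have "pdiff d ((Dx1 ^^ i) Fu) p" "pdiff d ((Dx1 ^^ i) Fv) p" for i
    using Dx1_iterate_Fu(2)[of "Suc 0" i] Dx1_iterate_Fv(2)[of "Suc 0" i] assms(2) by simp_all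
  then show ?thesis
    using pdiffable_Ybar assms(1) by (auto simp: Dyb_coef_eq pdiffable_def split: coord.split)
qed

lemma vf_const: "vf w (\<lambda>q. a) p = 0"
  by (simp add: vf_def)

lemma vf_coord: "vf w (\<lambda>q. q d) p = w d p"
  using vf_eq_sum[of "{d}" "\<lambda>q. q d" w p] by (simp add: depends_only_coord)

lemma vf_Dxb_coef_jet:
  assumes "depends_only g (jet_coords i)"
  shows "vf (Dxb_coef k) g p = Dx1 g p"
proof -
  have "(\<Sum>c\<in>jet_coords i. Dxb_coef k c p * pd c g p) = (\<Sum>c\<in>jet_coords i. Dx1_coef c p * pd c g p)"
    by (intro sum.cong refl) (auto simp: jet_coords_def Dxb_coef_def Dx1_coef_def)
  then show ?thesis
    unfolding Dx1_def by (simp add: vf_eq_sum[OF finite_jet_coords assms])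
qed

lemma Dxb_Dyb_coef_compatible:
  assumes "allowed k c" "p \<in> Dom"
  shows "vf (Dxb_coef k) (Dyb_coef k c) p = vf (Dyb_coef k) (Dxb_coef k c) p"
proof (cases c)
  case (CU i)
  then show ?thesis
    using assms by (simp add: Dxb_coef_eq Dyb_coef_eq vf_coord vf_Dxb_coef_jet[OF Dx1_iterate_Fu(1)])
      (simp add: Dyb_coef_def)
next
  case (CV i)
  then show ?thesis
    using assms by (simp add: Dxb_coef_eq Dyb_coef_eq vf_coord vf_Dxb_coef_jet[OF Dx1_iterate_Fv(1)])
      (simp add: Dyb_coef_def)
next
  case (CPhi j)
  then have "enat j \<le> k + 1"
    using assms(1) by (simp add: allowed_def)
  then show ?thesis
    using assms CPhi Dxb_Ybar_eq_Dyb_Xbar by (simp add: Dxb_coef_eq Dyb_coef_eq Dxb_def Dyb_def)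
qed (use assms in \<open>simp_all add: Dxb_coef_eq Dyb_coef_eq vf_const\<close>)

theorem Dxb_Dyb_commute:
  assumes f: "smooth_fun_on k f" and p: "p \<in> Dom"
  shows "Dxb k (Dyb k f) p = Dyb k (Dxb k f) p"
proof -
  obtain S where S: "finite S" "\<forall>c\<in>S. allowed k c" "depends_only f S" "smooth f"
    using f unfolding smooth_fun_on_def by blast
  define T where "T = S \<union> (\<Union>c\<in>S. coef_coords c)"
  have T: "finite T" "S \<subseteq> T"
    unfolding T_def using S(1) finite_coef_coords by auto
  have coef_T: "depends_only (Dxb_coef k c) T" "depends_only (Dyb_coef k c) T" if "c \<in> S" for c
    using that S(2) unfolding T_def
    by (auto intro!: depends_only_mono[OF depends_only_Dxb_coef] depends_only_mono[OF depends_only_Dyb_coef])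
  have "Dxb k (Dyb k f) p - Dyb k (Dxb k f) p =
      (\<Sum>c\<in>S. (vf (Dxb_coef k) (Dyb_coef k c) p - vf (Dyb_coef k) (Dxb_coef k c) p) * pd c f p)"
    unfolding Dxb_def Dyb_def
    using S(2) coef_T p smooth_pdiff[OF S(4) p]
      pd_pd_commute[OF p smooth_pdiff[OF S(4)] smooth_continuous_on_pd2[OF S(4)]]
    by (intro vf_commutator[OF S(1,3) T]) (auto intro: pdiff_Dxb_coef pdiff_Dyb_coef)
  also have "\<dots> = 0"
    using Dxb_Dyb_coef_compatible[OF _ p] S(2) by simp
  finally show ?thesis
    by simp
qed

section \<open>Functions annihilated by \<open>D\<^sub>x\<close> and \<open>D\<^sub>y\<close>\<close>

lemma upd_segment_in_Dom:
  assumes "x \<in> Dom" "x(c := t) \<in> Dom"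
    and "x (CU 0) < x (CV 0) \<longleftrightarrow> (x(c := t)) (CU 0) < (x(c := t)) (CV 0)"
    and "s \<in> closed_segment (x c) t"
  shows "x(c := s) \<in> Dom"
proof -
  have s: "min (x c) t \<le> s" "s \<le> max (x c) t"
    using assms(4) by (auto simp: closed_segment_eq_real_ivl split: if_splits)
  consider "c = CU 0" | "c = CV 0" | "c \<noteq> CU 0" "c \<noteq> CV 0"
    by blast
  then show ?thesis
  proof cases
    case 1
    then have "x (CU 0) \<noteq> x (CV 0)" "t \<noteq> x (CV 0)" "x (CU 0) < x (CV 0) \<longleftrightarrow> t < x (CV 0)"
      using assms(1-3) by (auto simp: Dom_def)
    then have "s \<noteq> x (CV 0)"
      using s 1 by (auto simp: min_def max_def split: if_splits)
    then show ?thesis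
      using 1 by (simp add: Dom_def)
  next
    case 2
    then have "x (CU 0) \<noteq> x (CV 0)" "t \<noteq> x (CU 0)" "x (CU 0) < x (CV 0) \<longleftrightarrow> x (CU 0) < t"
      using assms(1-3) by (auto simp: Dom_def)
    then have "s \<noteq> x (CU 0)"
      using s 2 by (auto simp: min_def max_def split: if_splits)
    then show ?thesis
      using 2 by (simp add: Dom_def)
  qed (use assms(1) in \<open>simp add: Dom_def\<close>)
qed

lemma upd_eq_if_pd_eq_0:
  assumes pdiff: "\<And>r. r \<in> Dom \<Longrightarrow> pdiff c f r" and pd0: "\<And>r. r \<in> Dom \<Longrightarrow> pd c f r = 0"
    and x: "x \<in> Dom" "x(c := t) \<in> Dom"
    and side: "x (CU 0) < x (CV 0) \<longleftrightarrow> (x(c := t)) (CU 0) < (x(c := t)) (CV 0)"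
  shows "f (x(c := t)) = f x"
proof -
  have "((\<lambda>s. f (x(c := s))) has_real_derivative 0) (at s within closed_segment (x c) t)"
    if "s \<in> closed_segment (x c) t" for s
  proof -
    have "x(c := s) \<in> Dom"
      using upd_segment_in_Dom[OF x side that] .
    from pdiff_has_pd[OF pdiff[OF this]] pd0[OF this]
    show ?thesis
      by (simp add: has_field_derivative_at_within)
  qed
  then obtain C where "\<forall>s\<in>closed_segment (x c) t. f (x(c := s)) = C"
    using has_field_derivative_zero_constant[OF convex_closed_segment] by blast
  then show ?thesis
    by (metis ends_in_segment fun_upd_triv)
qed

lemma pd_upd_eq:
  assumes "c \<noteq> e" "eventually (\<lambda>s. f ((r(c := s))(e := t)) = f (r(c := s))) (nhds (r c))"
  shows "pd c f (r(e := t)) = pd c f r"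
proof -
  have "(r(e := t))(c := s) = (r(c := s))(e := t)" for s
    using assms(1) by (simp add: fun_upd_twist)
  then have "pd c f (r(e := t)) = deriv (\<lambda>s. f ((r(c := s))(e := t))) (r c)"
    unfolding pd_def using assms(1) by simp
  also have "\<dots> = pd c f r"
    unfolding pd_def by (rule deriv_cong_ev[OF assms(2) refl])
  finally show ?thesis .
qed

lemma vf_eq_CX_CY:
  assumes "\<And>c. c \<noteq> CX \<Longrightarrow> c \<noteq> CY \<Longrightarrow> pd c f p = 0"
  shows "vf coef f p = coef CX p * pd CX f p + coef CY p * pd CY f p"
proof -
  have "vf coef f p = (\<Sum>c\<in>{CX, CY}. coef c p * pd c f p)"
    unfolding vf_def using assms by (intro sum.mono_neutral_left) auto
  then show ?thesis
    by simp
qed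

text \<open>Shifting u_(i+1) by one changes the coefficient of D_x at u_i by one and no other coefficient,
  so if f does not depend on u_(i+1), then D_x f = 0 forces df/du_i = 0.\<close>

lemma pd_jet_eq_0_step:
  assumes C: "C = CU \<or> C = CV"
    and S: "finite S" "depends_only f S" and pdiff: "\<And>c r. r \<in> Dom \<Longrightarrow> pdiff c f r"
    and Dx: "\<And>r. r \<in> Dom \<Longrightarrow> Dxb k f r = 0"
    and pd_Suc: "\<And>r. r \<in> Dom \<Longrightarrow> pd (C (Suc i)) f r = 0" and x: "x \<in> Dom"
  shows "pd (C i) f x = 0"
proof -
  define e where "e = C (Suc i)"
  define x' where "x' = x(e := x e + 1)"
  have e: "e \<noteq> CU 0" "e \<noteq> CV 0"
    using C by (auto simp: e_def)
  have "x' \<in> Dom"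
    using x e by (simp add: x'_def Dom_def)
  have f_e: "f (r(e := t)) = f r" if "r \<in> Dom" for r t
    using that e by (intro upd_eq_if_pd_eq_0[OF pdiff]) (auto simp: e_def pd_Suc Dom_def)
  have pd_x': "pd c f x' = pd c f x" for c
  proof (cases "c = e")
    case True
    then show ?thesis
      using pd_Suc x \<open>x' \<in> Dom\<close> by (simp add: e_def)
  next
    case False
    then show ?thesis
      unfolding x'_def using eventually_upd_in_Dom[OF x, of c]
      by (intro pd_upd_eq) (auto elim!: eventually_mono intro: f_e)
  qed
  have coef_x': "Dxb_coef k c x' = Dxb_coef k c x + (if c = C i then 1 else 0)" for c
  proof (cases c)
    case (CPhi j)
    have "\<forall>d\<in>phi_coords j. x' d = x d"
      using C by (auto simp: x'_def e_def phi_coords_def)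
    then have "Xbar j x' = Xbar j x"
      using depends_only_Xbar_Ybar(1)[OF order_refl] unfolding depends_only_def by blast
    then show ?thesis
      using CPhi C by (auto simp: Dxb_coef_def)
  qed (use C in \<open>auto simp: Dxb_coef_def x'_def e_def\<close>)
  have "0 = Dxb k f x' - Dxb k f x"
    using Dx x \<open>x' \<in> Dom\<close> by simp
  also have "\<dots> = (\<Sum>c\<in>S. if c = C i then pd c f x else 0)"
    unfolding Dxb_def vf_eq_sum[OF S] sum_subtractf[symmetric] by (intro sum.cong) (auto simp: coef_x' pd_x' algebra_simps)
  also have "\<dots> = pd (C i) f x"
    using pd_outside[OF S(2)] by (simp add: sum.delta[OF S(1)])
  finally show ?thesis
    by simp
qed

lemma pd_jet_eq_0:
  assumes S: "finite S" "depends_only f S" and pdiff: "\<And>c r. r \<in> Dom \<Longrightarrow> pdiff c f r"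
    and Dx: "\<And>r. r \<in> Dom \<Longrightarrow> Dxb k f r = 0" and C: "C = CU \<or> C = CV" and r: "r \<in> Dom"
  shows "pd (C i) f r = 0"
proof -
  obtain N where N: "\<And>i. N \<le> i \<Longrightarrow> C i \<notin> S"
  proof -
    have "finite (C -` S)"
      using S(1) C by (auto intro!: finite_vimageI simp: inj_def)
    then obtain N where N: "\<forall>i\<in>C -` S. i < N"
      using finite_nat_set_iff_bounded by blast
    show ?thesis
    proof (rule that)
      show "C i \<notin> S" if "N \<le> i" for i
      proof
        assume "C i \<in> S"
        then have "i < N"
          using N by simp
        with that show False
          by simp
      qed
    qed
  qed
  have "\<forall>r\<in>Dom. pd (C i) f r = 0" if "i \<le> N" for i
    using that
  proof (induction i rule: inc_induct)
    case base
    then show ?case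
      using N pd_outside[OF S(2)] by blast
  next
    case (step i)
    then show ?case
      using pd_jet_eq_0_step[OF C S pdiff Dx] by blast
  qed
  then show ?thesis
    using N pd_outside[OF S(2)] r by (cases "i \<le> N") auto
qed

lemma poly_sum_eq_0_imp_coeffs_eq_0:
  fixes P :: "'b \<Rightarrow> 'a::idom poly"
  assumes J: "finite J" "inj_on (\<lambda>j. degree (P j)) J" "\<And>j. j \<in> J \<Longrightarrow> 0 < degree (P j)"
    and Ts: "infinite Ts" "\<And>t. t \<in> Ts \<Longrightarrow> c + (\<Sum>j\<in>J. a j * poly (P j) t) = 0"
  shows "\<forall>j\<in>J. a j = 0"
proof (rule ccontr)
  define J' where "J' = {j \<in> J. a j \<noteq> 0}"
  assume "\<not> (\<forall>j\<in>J. a j = 0)"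
  then have J': "finite J'" "J' \<noteq> {}"
    using J(1) by (auto simp: J'_def)
  define D where "D = Max ((\<lambda>j. degree (P j)) ` J')"
  have "D \<in> (\<lambda>j. degree (P j)) ` J'"
    unfolding D_def using J' by (intro Max_in) auto
  then obtain m where m: "m \<in> J'" "degree (P m) = D"
    by auto
  define R where "R = [:c:] + (\<Sum>j\<in>J. smult (a j) (P j))"
  have "Ts \<subseteq> {t. poly R t = 0}"
    using Ts(2) by (auto simp: R_def poly_sum)
  then have "R = 0"
    using Ts(1) poly_roots_finite finite_subset by blast
  have others: "coeff (smult (a j) (P j)) D = 0" if "j \<in> J" "j \<noteq> m" for j
  proof (cases "a j = 0")
    case False
    then have "j \<in> J'"
      using that(1) by (simp add: J'_def)
    then have "degree (P j) \<le> D"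
      using J' by (simp add: D_def)
    moreover have "degree (P j) \<noteq> D"
      using J(2) m that \<open>j \<in> J'\<close> by (auto simp: J'_def inj_on_def)
    ultimately show ?thesis
      by (simp add: coeff_eq_0)
  qed simp
  have "m \<in> J" "0 < D"
    using m J(3) by (auto simp: J'_def)
  then have "coeff R D = coeff [:c:] D + coeff (smult (a m) (P m)) D
      + (\<Sum>j\<in>J - {m}. coeff (smult (a j) (P j)) D)"
    using J(1) by (simp add: R_def coeff_sum sum.remove)
  moreover have "coeff [:c:] D = 0"
    using \<open>0 < D\<close> by (intro coeff_eq_0) simp
  moreover have "(\<Sum>j\<in>J - {m}. coeff (smult (a j) (P j)) D) = 0"
    using others by (intro sum.neutral) auto
  ultimately have "coeff R D = a m * lead_coeff (P m)"
    using m(2) by simp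
  moreover have "a m \<noteq> 0" "P m \<noteq> 0"
    using m J(3)[OF \<open>m \<in> J\<close>] by (auto simp: J'_def)
  ultimately show False
    using \<open>R = 0\<close> by simp
qed

lemma lphi_upd_CU0: "lphi (p(CU 0 := t)) = lphi p"
  by (rule fps_ext) (simp add: lphi_nth)

lemma Qser_upd_CU0: "Qser (p(CU 0 := t)) = lphi p * Bser p - fps_const t * (fps_X * Bser p)"
  by (simp add: Qser_def Bser_def lphi_upd_CU0 algebra_simps)

lemma inverse_Qser_upd_nth_poly:
  "\<exists>P. degree P \<le> n \<and> coeff P n = 1 \<and> (\<forall>t. inverse (Qser (p(CU 0 := t))) $ n = poly P t)"
proof (induction n rule: less_induct)
  case (less n)
  show ?case
  proof (cases "n = 0")
    case True
    then show ?thesis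
      by (intro exI[of _ "[:1:]"]) (simp add: Qser_nth_0)
  next
    case False
    then obtain m where m: "n = Suc m"
      by (cases n) auto
    obtain PP where PP: "\<And>i. i < n \<Longrightarrow> degree (PP i) \<le> i \<and> coeff (PP i) i = 1 \<and>
        (\<forall>t. inverse (Qser (p(CU 0 := t))) $ i = poly (PP i) t)"
      using less by metis
    define a b where "a i = (lphi p * Bser p) $ i" and "b i = - (fps_X * Bser p) $ i" for i
    have Q_upd: "Qser (p(CU 0 := t)) $ i = poly [:a i, b i:] t" for i t
      by (simp add: a_def b_def Qser_upd_CU0)
    define P where "P = - (\<Sum>i=1..n. [:a i, b i:] * PP (n - i))"
    have "inverse (Qser (p(CU 0 := t))) $ n = poly P t" for t
      using fps_inverse_nth_rec[OF Qser_nth_0, of "p(CU 0 := t)" n] False PP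
      by (simp add: P_def poly_sum Q_upd algebra_simps)
    moreover have deg: "degree ([:a i, b i:] * PP (n - i)) \<le> 1 + (n - i)" if "i \<in> {1..n}" for i
    proof -
      have "degree ([:a i, b i:] * PP (n - i)) \<le> degree [:a i, b i:] + degree (PP (n - i))"
        by (rule degree_mult_le)
      also have "\<dots> \<le> 1 + (n - i)"
        using PP[of "n - i"] that by (intro add_mono) auto
      finally show ?thesis .
    qed
    then have "degree ([:a i, b i:] * PP (n - i)) \<le> n" if "i \<in> {1..n}" for i
      using that by fastforce
    then have "degree P \<le> n"
      unfolding P_def degree_minus by (intro degree_sum_le) auto
    moreover have "coeff P n = 1"
    proof -
      define cf where "cf i = coeff ([:a i, b i:] * PP (n - i)) n" for i
      have "cf i = 0" if "i \<in> {2..n}" for i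
        unfolding cf_def using deg[of i] that by (intro coeff_eq_0) auto
      moreover have "cf 1 = -1"
      proof -
        have "coeff (PP m) (Suc m) = 0" "coeff (PP m) m = 1"
          using PP[of m] m by (auto intro: coeff_eq_0)
        moreover have "b 1 = -1"
          by (simp add: b_def Bser_def lphi_nth)
        ultimately show ?thesis
          by (simp add: cf_def m)
      qed
      moreover have "{1..n} = insert 1 {2..n}"
        using False by auto
      ultimately have "(\<Sum>i=1..n. cf i) = -1"
        by simp
      then show ?thesis
        by (simp add: P_def coeff_sum cf_def)
    qed
    ultimately show ?thesis
      by blast
  qed
qed

lemma Xbar_upd_poly:
  assumes "3 \<le> j"
  shows "\<exists>P. degree P = j - 2 \<and> (\<forall>t. Xbar j (p(CU 0 := t)) = poly P t)"
proof -
  obtain P where P: "degree P \<le> j - 2" "coeff P (j - 2) = 1"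
    "\<And>t. inverse (Qser (p(CU 0 := t))) $ (j - 2) = poly P t"
    using inverse_Qser_upd_nth_poly[of "j - 2" p] by blast
  have "degree (- P) = j - 2"
    using P(1,2) le_degree[of P "j - 2"] by simp
  moreover have "Xbar j (p(CU 0 := t)) = poly (- P) t" for t
    using assms P(3)[of t] by (simp add: Xbar_def Xser_eq fps_X_power_mult_nth)
  ultimately show ?thesis
    by blast
qed

lemma pd_upd_CU0_eq:
  assumes pdiff: "\<And>c r. r \<in> Dom \<Longrightarrow> pdiff c f r" and pd_u: "\<And>r. r \<in> Dom \<Longrightarrow> pd (CU 0) f r = 0"
    and r: "r \<in> Dom" and t: "r(CU 0 := t) \<in> Dom" "r (CU 0) < r (CV 0) \<longleftrightarrow> t < r (CV 0)"
  shows "pd c f (r(CU 0 := t)) = pd c f r"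
proof (cases "c = CU 0")
  case True
  then show ?thesis
    using pd_u r t(1) by simp
next
  case False
  define U where "U = {x. (x (CU 0) < x (CV 0) \<and> t < x (CV 0)) \<or> (x (CV 0) < x (CU 0) \<and> x (CV 0) < t)}"
  have "open U"
    unfolding U_def by (intro open_Collect_disj open_Collect_conj open_Collect_less) auto
  moreover have "r \<in> U"
    using r t by (auto simp: U_def Dom_def)
  moreover have "f (x(CU 0 := t)) = f x" if "x \<in> U" for x
    using that pd_u by (intro upd_eq_if_pd_eq_0[OF pdiff]) (auto simp: U_def Dom_def)
  ultimately show ?thesis
    using False by (intro pd_upd_eq) (auto elim!: eventually_mono[OF eventually_upd_in_open])
qed

lemma pd_CPhi_eq_0:
  assumes S: "finite S" "\<forall>c\<in>S. allowed k c" "depends_only f S"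
    and pdiff: "\<And>c r. r \<in> Dom \<Longrightarrow> pdiff c f r" and Dx: "\<And>r. r \<in> Dom \<Longrightarrow> Dxb k f r = 0"
    and jet: "\<And>i r. r \<in> Dom \<Longrightarrow> pd (CU i) f r = 0 \<and> pd (CV i) f r = 0"
    and r: "r \<in> Dom"
  shows "pd (CPhi j) f r = 0"
proof -
  define Ts where "Ts = (if r (CU 0) < r (CV 0) then {..< r (CV 0)} else {r (CV 0)<..})"
  have "infinite Ts"
    by (simp add: Ts_def infinite_Iio infinite_Ioi)
  have r_upd: "r(CU 0 := t) \<in> Dom" if "t \<in> Ts" for t
    using that by (auto simp: Ts_def Dom_def split: if_splits)
  have pd_r_upd: "pd c f (r(CU 0 := t)) = pd c f r" if "t \<in> Ts" for c t
    using that r_upd[OF that] jet r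
    by (intro pd_upd_CU0_eq[OF pdiff]) (auto simp: Ts_def Dom_def split: if_splits)
  define J where "J = CPhi -` S"
  have "finite J"
    unfolding J_def using S(1) by (intro finite_vimageI) (auto simp: inj_def)
  have J3: "3 \<le> j" if "j \<in> J" for j
    using S(2) that by (auto simp: J_def allowed_def)
  have "\<forall>j\<in>J. \<exists>P. degree P = j - 2 \<and> (\<forall>t. Xbar j (r(CU 0 := t)) = poly P t)"
    using Xbar_upd_poly J3 by blast
  then obtain PX where PX: "\<And>j. j \<in> J \<Longrightarrow> degree (PX j) = j - 2"
    "\<And>j t. j \<in> J \<Longrightarrow> Xbar j (r(CU 0 := t)) = poly (PX j) t"
    by (metis bchoice)
  define c0 where "c0 = (\<Sum>c\<in>S - range CPhi. Dxb_coef k c r * pd c f r)"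
  have "c0 + (\<Sum>j\<in>J. pd (CPhi j) f r * poly (PX j) t) = 0" if t: "t \<in> Ts" for t
  proof -
    define g where "g c = Dxb_coef k c (r(CU 0 := t)) * pd c f r" for c
    have "0 = (\<Sum>c\<in>S. g c)"
      using Dx[OF r_upd[OF t]] pd_r_upd[OF t] by (simp add: Dxb_def vf_eq_sum[OF S(1,3)] g_def)
    also have "\<dots> = (\<Sum>c\<in>S - range CPhi. g c) + (\<Sum>c\<in>CPhi ` J. g c)"
      using sum.Int_Diff[OF S(1), of g "range CPhi"] by (simp add: J_def add.commute image_vimage_eq Int_commute)
    also have "(\<Sum>c\<in>S - range CPhi. g c) = c0"
      unfolding c0_def g_def using jet[OF r] by (intro sum.cong refl) (auto simp: Dxb_coef_def split: coord.split)
    also have "(\<Sum>c\<in>CPhi ` J. g c) = (\<Sum>j\<in>J. g (CPhi j))"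
      by (simp add: sum.reindex inj_on_def)
    also have "\<dots> = (\<Sum>j\<in>J. pd (CPhi j) f r * poly (PX j) t)"
      using S(2) PX(2) by (intro sum.cong refl) (auto simp: g_def Dxb_coef_def J_def)
    finally show ?thesis
      by simp
  qed
  moreover have "inj_on (\<lambda>j. degree (PX j)) J"
  proof (rule inj_onI)
    show "j = j'" if "j \<in> J" "j' \<in> J" "degree (PX j) = degree (PX j')" for j j'
      using that J3[OF that(1)] J3[OF that(2)] PX(1)[OF that(1)] PX(1)[OF that(2)] by linarith
  qed
  moreover have "0 < degree (PX j)" if "j \<in> J" for j
    using PX(1)[OF that] J3[OF that] by linarith
  ultimately have "\<forall>j\<in>J. pd (CPhi j) f r = 0"
    using \<open>finite J\<close> \<open>infinite Ts\<close> by (intro poly_sum_eq_0_imp_coeffs_eq_0) auto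
  then show ?thesis
    using pd_outside[OF S(3)] by (cases "j \<in> J") (auto simp: J_def)
qed

lemma pd_eq_0_if_annihilated:
  assumes S: "finite S" "\<forall>c\<in>S. allowed k c" "depends_only f S"
    and pdiff: "\<And>c r. r \<in> Dom \<Longrightarrow> pdiff c f r"
    and D: "\<And>r. r \<in> Dom \<Longrightarrow> Dxb k f r = 0 \<and> Dyb k f r = 0" and r: "r \<in> Dom"
  shows "pd c f r = 0"
proof -
  have jet: "pd (CU i) f q = 0 \<and> pd (CV i) f q = 0" if "q \<in> Dom" for i q
    using pd_jet_eq_0[OF S(1,3) pdiff] D that by blast
  have others: "pd c f r = 0" if "c \<noteq> CX" "c \<noteq> CY" for c
    using that jet[OF r] pd_CPhi_eq_0[OF S pdiff _ jet r] D by (cases c) auto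
  have "Dxb k f r = pd CX f r" "Dyb k f r = pd CY f r"
    using vf_eq_CX_CY[of f r "Dxb_coef k", OF others] vf_eq_CX_CY[of f r "Dyb_coef k", OF others]
    by (simp_all add: Dxb_def Dyb_def Dxb_coef_def Dyb_coef_def)
  then show ?thesis
    using D[OF r] others by (cases "c = CX \<or> c = CY") auto
qed

lemma override_on_eq_if_pd_eq_0:
  assumes pdiff: "\<And>c r. r \<in> Dom \<Longrightarrow> pdiff c f r" and pd0: "\<And>c r. r \<in> Dom \<Longrightarrow> pd c f r = 0"
    and p: "p \<in> Dom" and G: "finite G" "CU 0 \<notin> G" "CV 0 \<notin> G"
  shows "f (override_on p q G) = f p"
proof -
  have "override_on p q G \<in> Dom \<and> f (override_on p q G) = f p"
    using G
  proof (induction G rule: finite_induct)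
    case (insert c G)
    define x where "x = override_on p q G"
    have "x \<in> Dom" "f x = f p" "c \<noteq> CU 0" "c \<noteq> CV 0"
      using insert by (auto simp: x_def)
    moreover from this have "x(c := q c) \<in> Dom"
      by (simp add: Dom_def)
    moreover from calculation have "f (x(c := q c)) = f x"
      by (intro upd_eq_if_pd_eq_0[OF pdiff pd0]) simp_all
    moreover have "override_on p q (insert c G) = x(c := q c)"
      by (auto simp: x_def override_on_def)
    ultimately show ?case
      by (simp only:)
  qed (simp add: p)
  then show ?thesis
    by blast
qed

text \<open>Within the half-plane u < v (or u > v) one can pass from (u, v) to (a, b) by moving one
  coordinate at a time, first pushing the larger one beyond both.\<close>

lemma upd_uv_eq_if_pd_eq_0:
  assumes pdiff: "\<And>c r. r \<in> Dom \<Longrightarrow> pdiff c f r" and pd0: "\<And>c r. r \<in> Dom \<Longrightarrow> pd c f r = 0"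
    and x: "x \<in> Dom" and ab: "a \<noteq> b" "x (CU 0) < x (CV 0) \<longleftrightarrow> a < b"
  shows "f (x(CU 0 := a, CV 0 := b)) = f x"
proof -
  note move = upd_eq_if_pd_eq_0[OF pdiff pd0]
  define M where "M = max (max (x (CU 0)) (x (CV 0))) (max a b) + 1"
  show ?thesis
  proof (cases "x (CU 0) < x (CV 0)")
    case True
    have "f (x(CV 0 := M)) = f x"
      by (rule move) (use True x in \<open>auto simp: M_def Dom_def\<close>)
    moreover have "f (x(CV 0 := M, CU 0 := a)) = f (x(CV 0 := M))"
      by (rule move) (use True ab in \<open>auto simp: M_def Dom_def\<close>)
    moreover have "f (x(CV 0 := M, CU 0 := a, CV 0 := b)) = f (x(CV 0 := M, CU 0 := a))"
      by (rule move) (use True ab in \<open>auto simp: M_def Dom_def\<close>)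
    ultimately show ?thesis
      by (simp add: fun_upd_twist)
  next
    case False
    have "f (x(CU 0 := M)) = f x"
      by (rule move) (use False x in \<open>auto simp: M_def Dom_def\<close>)
    moreover have "f (x(CU 0 := M, CV 0 := b)) = f (x(CU 0 := M))"
      by (rule move) (use False x ab in \<open>auto simp: M_def Dom_def\<close>)
    moreover have "f (x(CU 0 := M, CV 0 := b, CU 0 := a)) = f (x(CU 0 := M, CV 0 := b))"
      by (rule move) (use False x ab in \<open>auto simp: M_def Dom_def\<close>)
    ultimately show ?thesis
      by (simp add: fun_upd_twist)
  qed
qed

lemma eq_if_pd_eq_0:
  assumes S: "finite S" "depends_only f S"
    and pdiff: "\<And>c r. r \<in> Dom \<Longrightarrow> pdiff c f r" and pd0: "\<And>c r. r \<in> Dom \<Longrightarrow> pd c f r = 0"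
    and p: "p \<in> Dom" and q: "q \<in> Dom" and side: "p (CU 0) < p (CV 0) \<longleftrightarrow> q (CU 0) < q (CV 0)"
  shows "f p = f q"
proof -
  define p' where "p' = override_on p q (S - {CU 0, CV 0})"
  have "f p' = f p"
    unfolding p'_def using S(1) by (intro override_on_eq_if_pd_eq_0[OF pdiff pd0 p]) auto
  moreover have "p' (CU 0) = p (CU 0)" "p' (CV 0) = p (CV 0)"
    by (simp_all add: p'_def override_on_def)
  then have "p' \<in> Dom" "f (p'(CU 0 := q (CU 0), CV 0 := q (CV 0))) = f p'"
    using p q side by (auto simp: Dom_def intro!: upd_uv_eq_if_pd_eq_0[OF pdiff pd0])
  moreover have "\<forall>c\<in>S. (p'(CU 0 := q (CU 0), CV 0 := q (CV 0))) c = q c"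
    by (simp add: p'_def override_on_def)
  then have "f (p'(CU 0 := q (CU 0), CV 0 := q (CV 0))) = f q"
    using S(2) unfolding depends_only_def by blast
  ultimately show ?thesis
    by simp
qed

theorem eq_if_Dxb_Dyb_eq_0:
  assumes f: "smooth_fun_on k f" and D: "\<And>r. r \<in> Dom \<Longrightarrow> Dxb k f r = 0 \<and> Dyb k f r = 0"
    and "p \<in> Dom" "q \<in> Dom" "p (CU 0) < p (CV 0) \<longleftrightarrow> q (CU 0) < q (CV 0)"
  shows "f p = f q"
proof -
  obtain S where S: "finite S" "\<forall>c\<in>S. allowed k c" "depends_only f S" "smooth f"
    using f unfolding smooth_fun_on_def by blast
  have pdiff: "\<And>c r. r \<in> Dom \<Longrightarrow> pdiff c f r"
    using smooth_pdiff(1)[OF S(4)] .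
  have pd0: "pd c f r = 0" if "r \<in> Dom" for c r
    using S(1-3) pdiff D that by (rule pd_eq_0_if_annihilated)
  show ?thesis
    using eq_if_pd_eq_0[OF S(1,3) pdiff pd0 assms(3-5)] .
qed

theorem mainTheorem8:
  fixes k :: enat
  assumes "k \<ge> 2"
  shows "(\<forall>f. smooth_fun_on k f \<longrightarrow>
            (\<forall>p\<in>Dom. Dxb k (Dyb k f) p = Dyb k (Dxb k f) p))
       \<and> (\<forall>f. smooth_fun_on k f \<and> (\<forall>p\<in>Dom. Dxb k f p = 0 \<and> Dyb k f p = 0) \<longrightarrow>
            (\<forall>p\<in>Dom. \<forall>q\<in>Dom. (p (CU 0) < p (CV 0) \<longleftrightarrow> q (CU 0) < q (CV 0)) \<longrightarrow> f p = f q))"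
proof -
  show ?thesis
    using Dxb_Dyb_commute eq_if_Dxb_Dyb_eq_0 by blast
qed

end
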